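(* Let $A=\sigma(R)\langle x_1,\dots,x_n\rangle$ be a $\sigma$-PBW extension of $R$ (under the standing assumptions below). Let $M\neq0$ be a submodule of $A^m$ and let $G$ be a finite set of nonzero generators of $M$. The following are equivalent: (i) $G$ is a Gröbner basis of $M$. (ii) For every $F=\{\mathbf g_1,\dots,\mathbf g_s\}\subseteq G$ with $\mathbf X_F\neq\mathbf 0$, every $\theta\in\mathbb N^n$, and every $(b_1,\dots,b_s)\in B_{F,\theta}$, we have $\sum_{i=1}^sb_ix^{\gamma_i+\theta}\mathbf g_i\xrightarrow{G}_+\mathbf 0$. In particular, if $G$ is a Gröbner basis of $M$, then for all such $F$ and all $(b_1,\dots,b_s)\in B_F$ we have $\sum_{i=1}^sb_ix^{\gamma_i}\mathbf g_i\xrightarrow{G}_+\mathbf 0$.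
   Context: Let $R\subseteq A$ be rings. $A$ is a $\sigma$-PBW extension of $R$, written $A=\sigma(R)\langle x_1,\dots,x_n\rangle$, if there are $x_1,\dots,x_n\in A\setminus R$ such that: (i) $A$ is a free left $R$-module with basis $\mathrm{Mon}(A)=\{x^\alpha=x_1^{\alpha_1}\cdots x_n^{\alpha_n}:\alpha\in\mathbb N^n\}$, with $x^0=1$; (ii) for every $i$ and every $r\in R\setminus\{0\}$ there is $c_{i,r}\in R\setminus\{0\}$ with $x_ir-c_{i,r}x_i\in R$; (iii) for all $i,j$ there is $c_{i,j}\in R\setminus\{0\}$ with $x_jx_i-c_{i,j}x_ix_j\in R+Rx_1+\dots+Rx_n$. There are injective ring endomorphisms $\sigma_i$ of $R$ and $\sigma_i$-derivations $\delta_i$ with $x_ir=\sigma_i(r)x_i+\delta_i(r)$. Write $\sigma^\alpha=\sigma_1^{\alpha_1}\circ\cdots\circ\sigma_n^{\alpha_n}$ and $|\alpha|=\sum\alpha_i$. For $\alpha,\beta$ there are unique $c_{\alpha,\beta}\in R$ (left invertible) and $p_{\alpha,\beta}\in A$ with $x^\alpha x^\beta=c_{\alpha,\beta}x^{\alpha+\beta}+p_{\alpha,\beta}$, where $p_{\alpha,\beta}=0$ or $\deg p_{\alpha,\beta}<|\alpha+\beta|$. Standing assumptions: $R$ is left Gröbner soluble (left Noetherian; left ideal membership decidable with computable coefficients; finite generating sets of $\mathrm{Syz}_R[r_1\cdots r_k]=\{(b_1,\dots,b_k)\in R^k:\sum b_ir_i=0\}$ computable). $\mathrm{Mon}(A)$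 carries a monomial order, i.e. a total order $\succeq$ with: (a) $x^\beta\succeq x^\alpha\Rightarrow lm(x^\gamma x^\beta x^\lambda)\succeq lm(x^\gamma x^\alpha x^\lambda)$; (b) $x^\alpha\succeq1$; (c) $|\beta|\ge|\alpha|\Rightarrow x^\beta\succeq x^\alpha$. $A^m$ is the free left $A$-module of column vectors with canonical basis $\mathbf e_i$. Monomials of $A^m$ are $x^\alpha\mathbf e_i$, with $\mathrm{ind}=i$, $\exp=\alpha$, $\deg=|\alpha|$. The monomial $x^\alpha\mathbf e_i$ divides $x^\beta\mathbf e_j$ iff $i=j$ and $\beta_k\ge\alpha_k$ for all $k$. The lcm of $x^\alpha\mathbf e_i$ and $x^\beta\mathbf e_j$ is $\mathbf 0$ if $i\neq j$, and $x^\gamma\mathbf e_i$ with $\gamma_k=\max(\alpha_k,\beta_k)$ if $i=j$. $\mathrm{Mon}(A^m)$ carries a monomial order, i.e. a total order with: (i) $lm(x^\beta x^\alpha)\mathbf e_i\succeq x^\alpha\mathbf e_i$; (ii) $x^\beta\mathbf e_j\succeq x^\alpha\mathbf e_i\Rightarrow lm(x^\gamma x^\beta)\mathbf e_j\succeq lm(x^\gamma x^\alpha)\mathbf e_i$; (iii) $\deg\mathbf X\ge\deg\mathbf Y\Rightarrow\mathbf X\succeq\mathbf Y$. For nonzero $\mathbf f=c_1\mathbf X_1+\dots+c_t\mathbf X_t$ with $c_i\in R\setminus\{0\}$ and $\mathbf X_1\succ\dots\succ\mathbf X_t$, set $lm(\mathbf f)=\mathbf X_1$, $lc(\mathbf f)=c_1$,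 $lt(\mathbf f)=c_1\mathbf X_1$. Also $lm(\mathbf 0)=\mathbf 0$ and $\mathbf X\succ\mathbf 0$. Reduction. Let $F$ be a finite set of nonzero vectors and $\mathbf f,\mathbf h\in A^m$. We write $\mathbf f\xrightarrow{F}\mathbf h$ (one step) if there are $\mathbf f_1,\dots,\mathbf f_t\in F$ and $r_1,\dots,r_t\in R$ with: (1) $lm(\mathbf f_i)\mid lm(\mathbf f)$, with $\alpha_i+\exp(lm\,\mathbf f_i)=\exp(lm\,\mathbf f)$; (2) $lc(\mathbf f)=\sum r_i\sigma^{\alpha_i}(lc\,\mathbf f_i)c_{\alpha_i,\exp(lm\,\mathbf f_i)}$; (3) $\mathbf h=\mathbf f-\sum r_ix^{\alpha_i}\mathbf f_i$. By convention $\mathbf 0\xrightarrow{F}\mathbf 0$. $\mathbf f\xrightarrow{F}_+\mathbf h$ means a finite chain of one-step reductions from $\mathbf f$ to $\mathbf h$. $\mathbf f$ is reduced w.r.t. $F$ if $\mathbf f=\mathbf 0$ or no one-step reduction of $\mathbf f$ exists; otherwise it is reducible. Gröbner basis. For a submodule $M\neq0$ of $A^m$, a nonempty finite set $G$ of nonzero vectors of $M$ is a Gröbner basis for $M$ if every nonzero $\mathbf f\in M$ is reducible w.r.t. $G$. Syzygy data. For $F=\{\mathbf g_1,\dots,\mathbf g_s\}\subseteq A^m$: - $\mathbf X_F=\mathrm{lcm}\{lm(\mathbf g_1),\dots,lm(\mathbf g_s)\}$; - $\beta_i=\exp(lm\,\mathbf g_i)$; - when $\mathbf X_F\neq\mathbf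 0$, $\gamma_i\in\mathbb N^n$ is defined by $\gamma_i+\beta_i=\exp(\mathbf X_F)$. For $\theta\in\mathbb N^n$, $B_{F,\theta}$ is a finite generating set of the left $R$-module $$S_{F,\theta}=\mathrm{Syz}_R\big[\sigma^{\gamma_1+\theta}(lc\,\mathbf g_1)c_{\gamma_1+\theta,\beta_1}\ \cdots\ \sigma^{\gamma_s+\theta}(lc\,\mathbf g_s)c_{\gamma_s+\theta,\beta_s}\big].$$ For $\theta=0$ we write $B_F=B_{F,0}$. *)

theory Defs
  imports Main "HOL-Library.Function_Algebras"
begin

(* Exponent vectors alpha in N^n are functions nat => nat vanishing from index n on;
   variables x_1..x_n are x 0 .. x (n-1); vectors of A^m are functions nat => 'a
   vanishing from index m on (components 0..m-1); a monomial x^alpha e_i of A^m is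
   the pair (alpha, i). The ring A is the whole type 'a. *)

type_synonym mexp = "nat \<Rightarrow> nat"

definition exps :: "nat \<Rightarrow> mexp set" where
  "exps n = {\<alpha>. \<forall>i\<ge>n. \<alpha> i = 0}"

definition tdeg :: "nat \<Rightarrow> mexp \<Rightarrow> nat" where
  "tdeg n \<alpha> = (\<Sum>i<n. \<alpha> i)"

definition xmon :: "(nat \<Rightarrow> 'a::monoid_mult) \<Rightarrow> nat \<Rightarrow> mexp \<Rightarrow> 'a" where
  "xmon x n \<alpha> = prod_list (map (\<lambda>i. x i ^ \<alpha> i) [0..<n])"

definition is_coeffs :: "'a::ring_1 set \<Rightarrow> (nat \<Rightarrow> 'a) \<Rightarrow> nat \<Rightarrow> 'a \<Rightarrow> (mexp \<Rightarrow> 'a) \<Rightarrow> bool" where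
  "is_coeffs R x n a c \<longleftrightarrow>
     (\<forall>\<alpha>. c \<alpha> \<in> R) \<and> (\<forall>\<alpha>. c \<alpha> \<noteq> 0 \<longrightarrow> \<alpha> \<in> exps n) \<and> finite {\<alpha>. c \<alpha> \<noteq> 0} \<and>
     a = (\<Sum>\<alpha>\<in>{\<alpha>. c \<alpha> \<noteq> 0}. c \<alpha> * xmon x n \<alpha>)"

definition subring :: "'a::ring_1 set \<Rightarrow> bool" where
  "subring R \<longleftrightarrow> 0 \<in> R \<and> 1 \<in> R \<and> (\<forall>a\<in>R. \<forall>b\<in>R. a + b \<in> R \<and> a - b \<in> R \<and> a * b \<in> R)"

definition left_ideal :: "'a::ring_1 set \<Rightarrow> 'a set \<Rightarrow> bool" where
  "left_ideal R I \<longleftrightarrow> I \<subseteq> R \<and> 0 \<in> I \<and> (\<forall>a\<in>I. \<forall>b\<in>I. a + b \<in> I) \<and> (\<forall>r\<in>R. \<forall>a\<in>I. r * a \<in> I)"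

definition left_noetherian :: "'a::ring_1 set \<Rightarrow> bool" where
  "left_noetherian R \<longleftrightarrow>
     (\<forall>I :: nat \<Rightarrow> 'a set. (\<forall>k. left_ideal R (I k) \<and> I k \<subseteq> I (Suc k)) \<longrightarrow> (\<exists>N. \<forall>k\<ge>N. I k = I N))"

definition sigma_PBW :: "'a::ring_1 set \<Rightarrow> (nat \<Rightarrow> 'a) \<Rightarrow> nat \<Rightarrow> bool" where
  "sigma_PBW R x n \<longleftrightarrow>
     subring R \<and> (\<forall>i<n. x i \<notin> R) \<and>
     (\<forall>a. \<exists>!c. is_coeffs R x n a c) \<and>
     (\<forall>i<n. \<forall>r\<in>R. r \<noteq> 0 \<longrightarrow> (\<exists>c\<in>R. c \<noteq> 0 \<and> x i * r - c * x i \<in> R)) \<and>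
     (\<forall>i<n. \<forall>j<n. \<exists>c\<in>R. c \<noteq> 0 \<and>
        (\<exists>r0\<in>R. \<exists>r. (\<forall>k. r k \<in> R) \<and> x j * x i - c * x i * x j = r0 + (\<Sum>k<n. r k * x k)))"

definition coef :: "'a::ring_1 set \<Rightarrow> (nat \<Rightarrow> 'a) \<Rightarrow> nat \<Rightarrow> 'a \<Rightarrow> mexp \<Rightarrow> 'a" where
  "coef R x n a = (THE c. is_coeffs R x n a c)"

definition sig :: "'a::ring_1 set \<Rightarrow> (nat \<Rightarrow> 'a) \<Rightarrow> nat \<Rightarrow> 'a \<Rightarrow> 'a" where
  "sig R x i r = (THE c. c \<in> R \<and> x i * r - c * x i \<in> R)"

definition sigpow :: "'a::ring_1 set \<Rightarrow> (nat \<Rightarrow> 'a) \<Rightarrow> nat \<Rightarrow> mexp \<Rightarrow> 'a \<Rightarrow> 'a" where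
  "sigpow R x n \<alpha> = foldr (\<lambda>i f. (sig R x i ^^ \<alpha> i) \<circ> f) [0..<n] id"

definition cab :: "'a::ring_1 set \<Rightarrow> (nat \<Rightarrow> 'a) \<Rightarrow> nat \<Rightarrow> mexp \<Rightarrow> mexp \<Rightarrow> 'a" where
  "cab R x n \<alpha> \<beta> = coef R x n (xmon x n \<alpha> * xmon x n \<beta>) (\<alpha> + \<beta>)"

(* leading exponent of a nonzero element of A; mle a b means x^a \<preceq> x^b *)
definition lmA :: "'a::ring_1 set \<Rightarrow> (nat \<Rightarrow> 'a) \<Rightarrow> nat \<Rightarrow> (mexp \<Rightarrow> mexp \<Rightarrow> bool) \<Rightarrow> 'a \<Rightarrow> mexp" where
  "lmA R x n mle p = (THE \<alpha>. coef R x n p \<alpha> \<noteq> 0 \<and> (\<forall>\<beta>. coef R x n p \<beta> \<noteq> 0 \<longrightarrow> mle \<beta> \<alpha>))"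

(* monomial order on Mon(A) (degree compatibility read as: |alpha| < |beta| implies x^alpha \<preceq> x^beta) *)
definition mon_order :: "'a::ring_1 set \<Rightarrow> (nat \<Rightarrow> 'a) \<Rightarrow> nat \<Rightarrow> (mexp \<Rightarrow> mexp \<Rightarrow> bool) \<Rightarrow> bool" where
  "mon_order R x n mle \<longleftrightarrow>
     (\<forall>\<alpha>\<in>exps n. mle \<alpha> \<alpha>) \<and>
     (\<forall>\<alpha>\<in>exps n. \<forall>\<beta>\<in>exps n. mle \<alpha> \<beta> \<and> mle \<beta> \<alpha> \<longrightarrow> \<alpha> = \<beta>) \<and>
     (\<forall>\<alpha>\<in>exps n. \<forall>\<beta>\<in>exps n. \<forall>\<gamma>\<in>exps n. mle \<alpha> \<beta> \<and> mle \<beta> \<gamma> \<longrightarrow> mle \<alpha> \<gamma>) \<and>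
     (\<forall>\<alpha>\<in>exps n. \<forall>\<beta>\<in>exps n. mle \<alpha> \<beta> \<or> mle \<beta> \<alpha>) \<and>
     (\<forall>\<alpha>\<in>exps n. \<forall>\<beta>\<in>exps n. \<forall>\<gamma>\<in>exps n. \<forall>\<mu>\<in>exps n. mle \<alpha> \<beta> \<longrightarrow>
        mle (lmA R x n mle (xmon x n \<gamma> * xmon x n \<alpha> * xmon x n \<mu>))
            (lmA R x n mle (xmon x n \<gamma> * xmon x n \<beta> * xmon x n \<mu>))) \<and>
     (\<forall>\<alpha>\<in>exps n. mle 0 \<alpha>) \<and>
     (\<forall>\<alpha>\<in>exps n. \<forall>\<beta>\<in>exps n. tdeg n \<alpha> < tdeg n \<beta> \<longrightarrow> mle \<alpha> \<beta>)"

definition vmon_order :: "'a::ring_1 set \<Rightarrow> (nat \<Rightarrow> 'a) \<Rightarrow> nat \<Rightarrow> (mexp \<Rightarrow> mexp \<Rightarrow> bool) \<Rightarrow> nat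
     \<Rightarrow> (mexp \<times> nat \<Rightarrow> mexp \<times> nat \<Rightarrow> bool) \<Rightarrow> bool" where
  "vmon_order R x n mle m vle \<longleftrightarrow>
     (let Mo = exps n \<times> {..<m} in
     (\<forall>X\<in>Mo. vle X X) \<and>
     (\<forall>X\<in>Mo. \<forall>Y\<in>Mo. vle X Y \<and> vle Y X \<longrightarrow> X = Y) \<and>
     (\<forall>X\<in>Mo. \<forall>Y\<in>Mo. \<forall>Z\<in>Mo. vle X Y \<and> vle Y Z \<longrightarrow> vle X Z) \<and>
     (\<forall>X\<in>Mo. \<forall>Y\<in>Mo. vle X Y \<or> vle Y X) \<and>
     (\<forall>\<alpha>\<in>exps n. \<forall>\<beta>\<in>exps n. \<forall>i<m. vle (\<alpha>, i) (lmA R x n mle (xmon x n \<beta> * xmon x n \<alpha>), i)) \<and>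
     (\<forall>\<alpha>\<in>exps n. \<forall>\<beta>\<in>exps n. \<forall>\<gamma>\<in>exps n. \<forall>i<m. \<forall>j<m. vle (\<alpha>, i) (\<beta>, j) \<longrightarrow>
        vle (lmA R x n mle (xmon x n \<gamma> * xmon x n \<alpha>), i) (lmA R x n mle (xmon x n \<gamma> * xmon x n \<beta>), j)) \<and>
     (\<forall>X\<in>Mo. \<forall>Y\<in>Mo. tdeg n (fst X) < tdeg n (fst Y) \<longrightarrow> vle X Y))"

definition vecs :: "nat \<Rightarrow> (nat \<Rightarrow> 'a::zero) set" where
  "vecs m = {f. \<forall>i\<ge>m. f i = 0}"

definition smultv :: "'a::ring_1 \<Rightarrow> (nat \<Rightarrow> 'a) \<Rightarrow> (nat \<Rightarrow> 'a)" where
  "smultv a f = (\<lambda>i. a * f i)"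

definition submodule :: "nat \<Rightarrow> (nat \<Rightarrow> 'a::ring_1) set \<Rightarrow> bool" where
  "submodule m M \<longleftrightarrow> M \<subseteq> vecs m \<and> 0 \<in> M \<and> (\<forall>f\<in>M. \<forall>g\<in>M. f + g \<in> M) \<and> (\<forall>a. \<forall>f\<in>M. smultv a f \<in> M)"

definition lspan :: "(nat \<Rightarrow> 'a::ring_1) set \<Rightarrow> (nat \<Rightarrow> 'a) set" where
  "lspan G = {\<Sum>g\<in>G. smultv (a g) g | a. True}"

definition vcoef :: "'a::ring_1 set \<Rightarrow> (nat \<Rightarrow> 'a) \<Rightarrow> nat \<Rightarrow> (nat \<Rightarrow> 'a) \<Rightarrow> mexp \<times> nat \<Rightarrow> 'a" where
  "vcoef R x n f X = coef R x n (f (snd X)) (fst X)"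

definition lmV :: "'a::ring_1 set \<Rightarrow> (nat \<Rightarrow> 'a) \<Rightarrow> nat \<Rightarrow> (mexp \<times> nat \<Rightarrow> mexp \<times> nat \<Rightarrow> bool)
     \<Rightarrow> (nat \<Rightarrow> 'a) \<Rightarrow> mexp \<times> nat" where
  "lmV R x n vle f = (THE X. vcoef R x n f X \<noteq> 0 \<and> (\<forall>Y. vcoef R x n f Y \<noteq> 0 \<longrightarrow> vle Y X))"

definition lcV :: "'a::ring_1 set \<Rightarrow> (nat \<Rightarrow> 'a) \<Rightarrow> nat \<Rightarrow> (mexp \<times> nat \<Rightarrow> mexp \<times> nat \<Rightarrow> bool)
     \<Rightarrow> (nat \<Rightarrow> 'a) \<Rightarrow> 'a" where
  "lcV R x n vle f = vcoef R x n f (lmV R x n vle f)"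

definition red1 :: "'a::ring_1 set \<Rightarrow> (nat \<Rightarrow> 'a) \<Rightarrow> nat \<Rightarrow> (mexp \<times> nat \<Rightarrow> mexp \<times> nat \<Rightarrow> bool)
     \<Rightarrow> (nat \<Rightarrow> 'a) set \<Rightarrow> (nat \<Rightarrow> 'a) \<Rightarrow> (nat \<Rightarrow> 'a) \<Rightarrow> bool" where
  "red1 R x n vle F f h \<longleftrightarrow> f \<noteq> 0 \<and>
     (\<exists>(t::nat) (fs :: nat \<Rightarrow> nat \<Rightarrow> 'a) (rs :: nat \<Rightarrow> 'a) (as :: nat \<Rightarrow> mexp).
        (\<forall>i<t. fs i \<in> F \<and> rs i \<in> R \<and>
               snd (lmV R x n vle (fs i)) = snd (lmV R x n vle f) \<and>
               as i + fst (lmV R x n vle (fs i)) = fst (lmV R x n vle f)) \<and>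
        lcV R x n vle f = (\<Sum>i<t. rs i * sigpow R x n (as i) (lcV R x n vle (fs i))
                                   * cab R x n (as i) (fst (lmV R x n vle (fs i)))) \<and>
        h = f - (\<Sum>i<t. smultv (rs i * xmon x n (as i)) (fs i)))"

definition redstep :: "'a::ring_1 set \<Rightarrow> (nat \<Rightarrow> 'a) \<Rightarrow> nat \<Rightarrow> (mexp \<times> nat \<Rightarrow> mexp \<times> nat \<Rightarrow> bool)
     \<Rightarrow> (nat \<Rightarrow> 'a) set \<Rightarrow> (nat \<Rightarrow> 'a) \<Rightarrow> (nat \<Rightarrow> 'a) \<Rightarrow> bool" where
  "redstep R x n vle F f h \<longleftrightarrow> (f = 0 \<and> h = 0) \<or> red1 R x n vle F f h"

definition red_plus :: "'a::ring_1 set \<Rightarrow> (nat \<Rightarrow> 'a) \<Rightarrow> nat \<Rightarrow> (mexp \<times> nat \<Rightarrow> mexp \<times> nat \<Rightarrow> bool)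
     \<Rightarrow> (nat \<Rightarrow> 'a) set \<Rightarrow> (nat \<Rightarrow> 'a) \<Rightarrow> (nat \<Rightarrow> 'a) \<Rightarrow> bool" where
  "red_plus R x n vle F = (redstep R x n vle F)\<^sup>*\<^sup>*"

definition reducible :: "'a::ring_1 set \<Rightarrow> (nat \<Rightarrow> 'a) \<Rightarrow> nat \<Rightarrow> (mexp \<times> nat \<Rightarrow> mexp \<times> nat \<Rightarrow> bool)
     \<Rightarrow> (nat \<Rightarrow> 'a) set \<Rightarrow> (nat \<Rightarrow> 'a) \<Rightarrow> bool" where
  "reducible R x n vle F f \<longleftrightarrow> f \<noteq> 0 \<and> (\<exists>h. red1 R x n vle F f h)"

definition groebner_basis :: "'a::ring_1 set \<Rightarrow> (nat \<Rightarrow> 'a) \<Rightarrow> nat \<Rightarrow> (mexp \<times> nat \<Rightarrow> mexp \<times> nat \<Rightarrow> bool)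
     \<Rightarrow> (nat \<Rightarrow> 'a) set \<Rightarrow> (nat \<Rightarrow> 'a) set \<Rightarrow> bool" where
  "groebner_basis R x n vle M G \<longleftrightarrow>
     G \<noteq> {} \<and> finite G \<and> G \<subseteq> M \<and> 0 \<notin> G \<and>
     (\<forall>f\<in>M. f \<noteq> 0 \<longrightarrow> reducible R x n vle G f)"

(* X_F \<noteq> 0 for a nonempty finite F : all leading monomials have the same index *)
definition XF_nonzero :: "'a::ring_1 set \<Rightarrow> (nat \<Rightarrow> 'a) \<Rightarrow> nat \<Rightarrow> (mexp \<times> nat \<Rightarrow> mexp \<times> nat \<Rightarrow> bool)
     \<Rightarrow> (nat \<Rightarrow> 'a) set \<Rightarrow> bool" where
  "XF_nonzero R x n vle F \<longleftrightarrow> F \<noteq> {} \<and>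
     (\<forall>g\<in>F. \<forall>g'\<in>F. snd (lmV R x n vle g) = snd (lmV R x n vle g'))"

definition expXF :: "'a::ring_1 set \<Rightarrow> (nat \<Rightarrow> 'a) \<Rightarrow> nat \<Rightarrow> (mexp \<times> nat \<Rightarrow> mexp \<times> nat \<Rightarrow> bool)
     \<Rightarrow> (nat \<Rightarrow> 'a) set \<Rightarrow> mexp" where
  "expXF R x n vle F = (\<lambda>k. Max ((\<lambda>g. fst (lmV R x n vle g) k) ` F))"

definition gam :: "'a::ring_1 set \<Rightarrow> (nat \<Rightarrow> 'a) \<Rightarrow> nat \<Rightarrow> (mexp \<times> nat \<Rightarrow> mexp \<times> nat \<Rightarrow> bool)
     \<Rightarrow> (nat \<Rightarrow> 'a) set \<Rightarrow> (nat \<Rightarrow> 'a) \<Rightarrow> mexp" where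
  "gam R x n vle F g = (\<lambda>k. expXF R x n vle F k - fst (lmV R x n vle g) k)"

definition SF :: "'a::ring_1 set \<Rightarrow> (nat \<Rightarrow> 'a) \<Rightarrow> nat \<Rightarrow> (mexp \<times> nat \<Rightarrow> mexp \<times> nat \<Rightarrow> bool)
     \<Rightarrow> (nat \<Rightarrow> 'a) set \<Rightarrow> mexp \<Rightarrow> ((nat \<Rightarrow> 'a) \<Rightarrow> 'a) set" where
  "SF R x n vle F \<theta> = {b. (\<forall>g. b g \<in> R) \<and> (\<forall>g. g \<notin> F \<longrightarrow> b g = 0) \<and>
      (\<Sum>g\<in>F. b g * sigpow R x n (gam R x n vle F g + \<theta>) (lcV R x n vle g)
                 * cab R x n (gam R x n vle F g + \<theta>) (fst (lmV R x n vle g))) = 0}"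

definition Rspan :: "'a::ring_1 set \<Rightarrow> (('b \<Rightarrow> 'a)) set \<Rightarrow> ('b \<Rightarrow> 'a) set" where
  "Rspan R B = {(\<lambda>g. \<Sum>k\<in>B. r k * k g) | r. \<forall>k. r k \<in> R}"

end

theory Submission
  imports Defs
begin

text \<open>
  If \<open>G\<close> is a Groebner basis, every element of \<open>M\<close>, in particular every S-vector, reduces
  to zero: each reduction step strictly lowers the leading monomial, and a monomial order
  compatible with total degree has only finitely many monomials below a given one.

  Conversely, write \<open>f \<in> M\<close> as a sum of terms \<open>r x\<^sup>\<alpha> g\<close> with \<open>g \<in> G\<close> and take such a
  representation whose largest leading monomial \<open>X\<close> is minimal. If \<open>X = lm(f)\<close>, the terms with
  leading monomial \<open>X\<close> reduce \<open>f\<close>. Otherwise their leading coefficients cancel, so their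
  coefficients form a syzygy in \<open>S\<^sub>F\<^sub>,\<^sub>\<theta>\<close>, an \<open>R\<close>-combination of elements of \<open>B\<^sub>F\<^sub>,\<^sub>\<theta>\<close>.
  The corresponding S-vectors have leading monomial below \<open>X\<close>, and their reductions to zero
  rewrite them as sums of terms below \<open>X\<close>, contradicting the minimality of \<open>X\<close>.

  The ring-theoretic input is that \<open>x\<^sup>\<alpha> r x\<^sup>\<beta> = \<sigma>\<^sup>\<alpha>(r) c\<^sub>\<alpha>\<^sub>,\<^sub>\<beta> x\<^sup>\<alpha>\<^sup>+\<^sup>\<beta>\<close> up to terms of lower total
  degree, with \<open>c\<^sub>\<alpha>\<^sub>,\<^sub>\<beta>\<close> left invertible; it follows by induction on the degree from the
  defining relations of \<open>A\<close>.
\<close>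

lemma sum_fun_apply: "(\<Sum>i\<in>I. (f i :: 'c \<Rightarrow> 'b::comm_monoid_add)) k = (\<Sum>i\<in>I. f i k)"
  by (induction I rule: infinite_finite_induct) auto

lemma sum_list_fun_apply:
  "sum_list (map (f :: 'd \<Rightarrow> 'c \<Rightarrow> 'b::monoid_add) xs) k = sum_list (map (\<lambda>x. f x k) xs)"
  by (induction xs) auto

lemma sum_list_regroup:
  fixes h :: "'c \<Rightarrow> 'b::comm_monoid_add"
  assumes "finite F" "\<forall>t\<in>set ts. key t \<in> F"
  shows "(\<Sum>g\<in>F. sum_list (map (\<lambda>t. if key t = g then h t else 0) ts)) = sum_list (map h ts)"
  using assms(2)
proof (induction ts)
  case (Cons t ts)
  have "(\<Sum>g\<in>F. if key t = g then h t else 0) = h t"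
    using Cons.prems assms(1) by (simp add: sum.delta)
  then show ?case using Cons by (simp add: sum.distrib)
qed simp

lemma sum_list_map_filter_partition:
  "sum_list (map (h :: 'c \<Rightarrow> 'b::comm_monoid_add) xs)
     = sum_list (map h (filter P xs)) + sum_list (map h (filter (\<lambda>t. \<not> P t) xs))"
  by (induction xs) (auto simp: ac_simps)

lemma sum_list_map_upt: "sum_list (map f [0..<k]) = (\<Sum>i<k. f i)"
  by (simp add: interv_sum_list_conv_sum_set_nat atLeast0LessThan)

lemma sum_list_map_nonzeroE:
  assumes "sum_list (map f xs) \<noteq> (0 :: 'b::monoid_add)"
  obtains x where "x \<in> set xs" "f x \<noteq> 0"
proof -
  have "\<exists>x\<in>set xs. f x \<noteq> 0"
    using assms by (induction xs) auto
  then show ?thesis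
    using that by blast
qed

lemma smultv_one [simp]: "smultv 1 f = f"
  by (simp add: smultv_def)

lemma smultv_zero_left [simp]: "smultv 0 f = 0"
  by (simp add: smultv_def fun_eq_iff)

lemma smultv_assoc: "smultv a (smultv b f) = smultv (a * b) f"
  by (simp add: smultv_def fun_eq_iff mult.assoc)

lemma smultv_sum_left: "smultv (\<Sum>i\<in>I. a i) f = (\<Sum>i\<in>I. smultv (a i) f)"
  by (simp add: smultv_def fun_eq_iff sum_fun_apply sum_distrib_right)

lemma smultv_sum_right: "smultv a (\<Sum>i\<in>I. f i) = (\<Sum>i\<in>I. smultv a (f i))"
  by (simp add: smultv_def fun_eq_iff sum_fun_apply sum_distrib_left)

lemma smultv_sum_list_left: "smultv (sum_list (map a xs)) f = sum_list (map (\<lambda>t. smultv (a t) f) xs)"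
  by (simp add: smultv_def fun_eq_iff sum_list_fun_apply sum_list_mult_const)

lemma smultv_sum_list_right: "smultv a (sum_list (map f xs)) = sum_list (map (\<lambda>t. smultv a (f t)) xs)"
  by (simp add: smultv_def fun_eq_iff sum_list_fun_apply sum_list_const_mult)

lemma vecs_add [intro]: "(f :: nat \<Rightarrow> 'a::monoid_add) \<in> vecs m \<Longrightarrow> g \<in> vecs m \<Longrightarrow> f + g \<in> vecs m"
  by (simp add: vecs_def)

lemma vecs_diff [intro]: "(f :: nat \<Rightarrow> 'a::group_add) \<in> vecs m \<Longrightarrow> g \<in> vecs m \<Longrightarrow> f - g \<in> vecs m"
  by (simp add: vecs_def)

lemma zero_vecs [simp]: "0 \<in> vecs m"
  by (simp add: vecs_def)

lemma vecs_smultv [intro]: "f \<in> vecs m \<Longrightarrow> smultv a f \<in> vecs m"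
  by (simp add: vecs_def smultv_def)

lemma submodule_sum: "submodule m M \<Longrightarrow> (\<And>i. i \<in> I \<Longrightarrow> f i \<in> M) \<Longrightarrow> (\<Sum>i\<in>I. f i) \<in> M"
  by (induction I rule: infinite_finite_induct) (auto simp: submodule_def)

lemma submodule_add: "submodule m M \<Longrightarrow> f \<in> M \<Longrightarrow> g \<in> M \<Longrightarrow> f + g \<in> M"
  by (simp add: submodule_def)

lemma submodule_smultv: "submodule m M \<Longrightarrow> f \<in> M \<Longrightarrow> smultv a f \<in> M"
  by (simp add: submodule_def)

lemma submodule_diff:
  assumes "submodule m M" "f \<in> M" "g \<in> M"
  shows "f - g \<in> M"
proof -
  have "f - g = f + smultv (-1) g"
    by (simp add: smultv_def fun_eq_iff)
  moreover have "smultv (-1) g \<in> M"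
    using assms by (simp add: submodule_def)
  ultimately show ?thesis
    using assms unfolding submodule_def by metis
qed

lemma generator_in_lspan:
  assumes "finite G" "g \<in> G"
  shows "g \<in> lspan G"
proof -
  have "(\<Sum>h\<in>G. smultv (if h = g then 1 else 0) h) = g"
    using assms by (simp add: if_distrib[of "\<lambda>a. smultv a _"] cong: if_cong)
  then show ?thesis
    unfolding lspan_def by (intro CollectI exI[of _ "\<lambda>h. if h = g then 1 else 0"]) simp
qed

lemma generator_in_Rspan:
  assumes "0 \<in> R" "1 \<in> R" "finite B" "k \<in> B"
  shows "k \<in> Rspan R B"
proof -
  have "(\<lambda>g. \<Sum>k'\<in>B. (if k' = k then 1 else 0) * k' g) = k"
    using assms(3,4) by (simp add: if_distrib[of "\<lambda>a. a * _"] cong: if_cong)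
  moreover have "\<forall>k'. (if k' = k then 1 else 0) \<in> R"
    using assms(1,2) by simp
  ultimately show ?thesis
    unfolding Rspan_def by (intro CollectI exI[of _ "\<lambda>k'. if k' = k then 1 else 0"]) simp
qed

section \<open>The ring structure of a \<sigma>-PBW extension\<close>

definition unit_exp :: "nat \<Rightarrow> mexp" where
  "unit_exp j = (\<lambda>l. if l = j then 1 else 0)"

lemma prod_list_map_one: "prod_list (map (\<lambda>i. 1) xs) = 1"
  by (induction xs) simp_all

lemma upt_split_at: "j < n \<Longrightarrow> [0..<n] = [0..<j] @ j # [Suc j..<n]"
  by (metis le_add1 le_less_trans less_imp_add_positive upt_add_eq_append upt_conv_Cons zero_le)

locale pbw_extension =
  fixes R :: "'a::ring_1 set" and x :: "nat \<Rightarrow> 'a" and n :: nat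
  assumes pbw: "sigma_PBW R x n"
begin

abbreviation "cf \<equiv> coef R x n"
abbreviation "xm \<equiv> xmon x n"
abbreviation "td \<equiv> tdeg n"
abbreviation "sg \<equiv> sig R x"

lemma subring_R: "subring R"
  using pbw by (simp add: sigma_PBW_def)

lemma zero_in_R [simp]: "0 \<in> R"
  using subring_R by (simp add: subring_def)

lemma one_in_R [simp]: "1 \<in> R"
  using subring_R by (simp add: subring_def)

lemma add_in_R [intro]: "a \<in> R \<Longrightarrow> b \<in> R \<Longrightarrow> a + b \<in> R"
  using subring_R by (simp add: subring_def)

lemma diff_in_R [intro]: "a \<in> R \<Longrightarrow> b \<in> R \<Longrightarrow> a - b \<in> R"
  using subring_R by (simp add: subring_def)

lemma mult_in_R [intro]: "a \<in> R \<Longrightarrow> b \<in> R \<Longrightarrow> a * b \<in> R"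
  using subring_R by (simp add: subring_def)

lemma sum_list_in_R [intro]: "(\<And>t. t \<in> set xs \<Longrightarrow> f t \<in> R) \<Longrightarrow> sum_list (map f xs) \<in> R"
  by (induction xs) auto

lemma ex1_is_coeffs: "\<exists>!c. is_coeffs R x n a c"
  using pbw by (simp add: sigma_PBW_def)

lemma is_coeffs_coef: "is_coeffs R x n a (cf a)"
  unfolding coef_def using ex1_is_coeffs by (rule theI')

lemma coef_eqI: "is_coeffs R x n a c \<Longrightarrow> cf a = c"
  using is_coeffs_coef ex1_is_coeffs by blast

lemma coef_in_R [simp]: "cf a \<alpha> \<in> R"
  using is_coeffs_coef[of a] by (simp add: is_coeffs_def)

lemma coef_nonzero_exps: "cf a \<alpha> \<noteq> 0 \<Longrightarrow> \<alpha> \<in> exps n"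
  using is_coeffs_coef[of a] by (simp add: is_coeffs_def)

lemma coef_not_exps: "\<alpha> \<notin> exps n \<Longrightarrow> cf a \<alpha> = 0"
  using coef_nonzero_exps by blast

lemma finite_coef_support [simp]: "finite {\<alpha>. cf a \<alpha> \<noteq> 0}"
  using is_coeffs_coef[of a] by (simp add: is_coeffs_def)

lemma coef_expansion: "a = (\<Sum>\<alpha>\<in>{\<alpha>. cf a \<alpha> \<noteq> 0}. cf a \<alpha> * xm \<alpha>)"
  using is_coeffs_coef[of a] by (simp add: is_coeffs_def)

lemma coef_expansion_superset:
  assumes "finite S" "{\<alpha>. cf a \<alpha> \<noteq> 0} \<subseteq> S"
  shows "a = (\<Sum>\<alpha>\<in>S. cf a \<alpha> * xm \<alpha>)"
  by (subst coef_expansion) (rule sum.mono_neutral_left[OF assms]; simp)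

lemma coef_eqI_superset:
  assumes "\<And>\<alpha>. c \<alpha> \<in> R" "\<And>\<alpha>. c \<alpha> \<noteq> 0 \<Longrightarrow> \<alpha> \<in> exps n" "finite S"
    "{\<alpha>. c \<alpha> \<noteq> 0} \<subseteq> S" "a = (\<Sum>\<alpha>\<in>S. c \<alpha> * xm \<alpha>)"
  shows "cf a = c"
proof (rule coef_eqI)
  have "(\<Sum>\<alpha>\<in>S. c \<alpha> * xm \<alpha>) = (\<Sum>\<alpha>\<in>{\<alpha>. c \<alpha> \<noteq> 0}. c \<alpha> * xm \<alpha>)"
    by (rule sum.mono_neutral_right) (use assms in auto)
  then show "is_coeffs R x n a c"
    unfolding is_coeffs_def using assms finite_subset by auto
qed

lemma coef_add: "cf (a + b) = (\<lambda>\<alpha>. cf a \<alpha> + cf b \<alpha>)"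
proof -
  let ?S = "{\<alpha>. cf a \<alpha> \<noteq> 0} \<union> {\<alpha>. cf b \<alpha> \<noteq> 0}"
  have "a + b = (\<Sum>\<alpha>\<in>?S. (cf a \<alpha> + cf b \<alpha>) * xm \<alpha>)"
    using coef_expansion_superset[of ?S a] coef_expansion_superset[of ?S b]
    by (simp add: sum.distrib distrib_right)
  then show ?thesis
    by (intro coef_eqI_superset[of _ ?S]) (auto simp: coef_not_exps intro: ccontr)
qed

lemma coef_diff: "cf (a - b) = (\<lambda>\<alpha>. cf a \<alpha> - cf b \<alpha>)"
proof -
  let ?S = "{\<alpha>. cf a \<alpha> \<noteq> 0} \<union> {\<alpha>. cf b \<alpha> \<noteq> 0}"
  have "a - b = (\<Sum>\<alpha>\<in>?S. (cf a \<alpha> - cf b \<alpha>) * xm \<alpha>)"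
    using coef_expansion_superset[of ?S a] coef_expansion_superset[of ?S b]
    by (simp add: sum_subtractf left_diff_distrib)
  then show ?thesis
    by (intro coef_eqI_superset[of _ ?S]) (auto simp: coef_not_exps intro: ccontr)
qed

lemma coef_zero: "cf 0 = (\<lambda>_. 0)"
  by (rule coef_eqI_superset[of _ "{}"]) auto

lemma coef_mult_left:
  assumes "r \<in> R"
  shows "cf (r * a) = (\<lambda>\<alpha>. r * cf a \<alpha>)"
proof -
  let ?S = "{\<alpha>. cf a \<alpha> \<noteq> 0}"
  have "r * a = (\<Sum>\<alpha>\<in>?S. (r * cf a \<alpha>) * xm \<alpha>)"
    by (subst coef_expansion[of a]) (simp add: sum_distrib_left mult.assoc)
  then show ?thesis
    using assms by (intro coef_eqI_superset[of _ ?S]) (auto simp: coef_not_exps intro: ccontr)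
qed

lemma coef_sum: "finite I \<Longrightarrow> cf (\<Sum>i\<in>I. f i) = (\<lambda>\<alpha>. \<Sum>i\<in>I. cf (f i) \<alpha>)"
  by (induction I rule: finite_induct) (auto simp: coef_zero coef_add)

lemma coef_monom:
  assumes "r \<in> R" "\<alpha> \<in> exps n"
  shows "cf (r * xm \<alpha>) = (\<lambda>\<beta>. if \<beta> = \<alpha> then r else 0)"
  by (rule coef_eqI_superset[of _ "{\<alpha>}"]) (use assms in \<open>auto split: if_splits\<close>)

lemma coef_eq_zeroD: "(\<And>\<alpha>. cf a \<alpha> = 0) \<Longrightarrow> a = 0"
  using coef_expansion[of a] by simp

lemma zero_exps [simp]: "0 \<in> exps n"
  by (simp add: exps_def)

lemma exps_add [intro]: "\<alpha> \<in> exps n \<Longrightarrow> \<beta> \<in> exps n \<Longrightarrow> \<alpha> + \<beta> \<in> exps n"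
  by (simp add: exps_def)

lemma exps_add_left: "\<alpha> + \<beta> \<in> exps n \<Longrightarrow> \<alpha> \<in> exps n"
  by (simp add: exps_def)

lemma unit_exp_exps [intro]: "j < n \<Longrightarrow> unit_exp j \<in> exps n"
  by (simp add: exps_def unit_exp_def)

lemma tdeg_zero [simp]: "td 0 = 0"
  by (simp add: tdeg_def)

lemma tdeg_add: "td (\<alpha> + \<beta>) = td \<alpha> + td \<beta>"
  by (simp add: tdeg_def sum.distrib)

lemma tdeg_unit_exp: "j < n \<Longrightarrow> td (unit_exp j) = 1"
  by (simp add: tdeg_def unit_exp_def)

lemma xmon_zero [simp]: "xm 0 = 1"
  by (simp add: xmon_def prod_list_map_one)

lemma coef_of_R: "r \<in> R \<Longrightarrow> cf r = (\<lambda>\<beta>. if \<beta> = 0 then r else 0)"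
  using coef_monom[of r 0] by simp

lemma xmon_add_unit_exp:
  assumes "j < n" "\<forall>l<j. \<alpha> l = 0"
  shows "xm (\<alpha> + unit_exp j) = x j * xm \<alpha>"
proof -
  have front: "prod_list (map (\<lambda>i. x i ^ \<beta> i) [0..<j]) = 1" if "\<forall>l<j. \<beta> l = 0" for \<beta> :: mexp
  proof -
    have "map (\<lambda>i. x i ^ \<beta> i) [0..<j] = map (\<lambda>i. 1) [0..<j]"
      using that by simp
    then show ?thesis
      by (simp only: prod_list_map_one)
  qed
  have shifted: "\<forall>l<j. (\<alpha> + unit_exp j) l = 0"
    using assms(2) by (simp add: unit_exp_def)
  have tail: "map (\<lambda>i. x i ^ (\<alpha> + unit_exp j) i) [Suc j..<n] = map (\<lambda>i. x i ^ \<alpha> i) [Suc j..<n]"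
    by (auto simp: unit_exp_def)
  show ?thesis
    unfolding xmon_def upt_split_at[OF assms(1)]
    by (simp only: map_append list.map prod_list.append prod_list.Cons front[OF shifted]
        front[OF assms(2)] tail) (simp add: unit_exp_def mult.assoc)
qed

lemma xmon_unit_exp: "j < n \<Longrightarrow> xm (unit_exp j) = x j"
  using xmon_add_unit_exp[of j 0] by simp

lemma exps_split_first:
  assumes "\<alpha> \<in> exps n" "\<alpha> \<noteq> 0"
  obtains j \<alpha>' where "j < n" "\<alpha> = \<alpha>' + unit_exp j" "\<forall>l<j. \<alpha>' l = 0" "\<alpha>' \<in> exps n"
    "td \<alpha> = Suc (td \<alpha>')" "xm \<alpha> = x j * xm \<alpha>'"
proof -
  obtain i where i: "\<alpha> i \<noteq> 0"
    using assms(2) by (auto simp: fun_eq_iff)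
  define j where "j = (LEAST l. \<alpha> l \<noteq> 0)"
  have aj: "\<alpha> j \<noteq> 0"
    unfolding j_def using i by (rule LeastI)
  have below: "\<forall>l<j. \<alpha> l = 0"
    unfolding j_def using not_less_Least by blast
  have jn: "j < n"
    using aj assms(1) by (auto simp: exps_def intro: ccontr)
  define \<alpha>' where "\<alpha>' = \<alpha>(j := \<alpha> j - 1)"
  have eq: "\<alpha> = \<alpha>' + unit_exp j"
    using aj by (auto simp: \<alpha>'_def unit_exp_def fun_eq_iff)
  have "\<forall>l<j. \<alpha>' l = 0" "\<alpha>' \<in> exps n"
    using below assms(1) jn by (auto simp: exps_def \<alpha>'_def)
  moreover have "td \<alpha> = Suc (td \<alpha>')"
    using eq tdeg_add[of \<alpha>' "unit_exp j"] tdeg_unit_exp[OF jn] by simp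
  ultimately show ?thesis
    using that jn eq xmon_add_unit_exp[OF jn] by metis
qed

definition der :: "nat \<Rightarrow> 'a \<Rightarrow> 'a" where
  "der i r = x i * r - sg i r * x i"

lemma sig_unique:
  assumes "i < n" "c \<in> R" "c' \<in> R" "x i * r - c * x i \<in> R" "x i * r - c' * x i \<in> R"
  shows "c = c'"
proof -
  have eq: "(c' - c) * xm (unit_exp i) = (x i * r - c * x i) - (x i * r - c' * x i)"
    using assms(1) by (simp add: xmon_unit_exp algebra_simps)
  have "(c' - c) * xm (unit_exp i) \<in> R"
    unfolding eq using assms(4,5) by (rule diff_in_R)
  then have "cf ((c' - c) * xm (unit_exp i)) (unit_exp i) = 0"
    by (simp add: coef_of_R unit_exp_def fun_eq_iff)
  then show ?thesis
    using assms by (simp add: coef_monom diff_in_R unit_exp_exps)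
qed

lemma sig_props:
  assumes "i < n" "r \<in> R"
  shows "sg i r \<in> R" "der i r \<in> R"
proof -
  have "\<exists>c\<in>R. x i * r - c * x i \<in> R"
  proof (cases "r = 0")
    case False
    then show ?thesis
      using pbw assms unfolding sigma_PBW_def by blast
  qed (auto intro: bexI[of _ 0])
  then have "\<exists>!c. c \<in> R \<and> x i * r - c * x i \<in> R"
    using sig_unique[OF assms(1)] by blast
  then have "sg i r \<in> R \<and> x i * r - sg i r * x i \<in> R"
    unfolding sig_def by (rule theI')
  then show "sg i r \<in> R" "der i r \<in> R"
    by (simp_all add: der_def)
qed

lemma sig_in_R [intro]: "i < n \<Longrightarrow> r \<in> R \<Longrightarrow> sg i r \<in> R"
  and der_in_R [intro]: "i < n \<Longrightarrow> r \<in> R \<Longrightarrow> der i r \<in> R"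
  using sig_props by blast+

lemma var_mult_R: "x i * r = sg i r * x i + der i r"
  by (simp add: der_def)

lemma sig_eqI: "i < n \<Longrightarrow> r \<in> R \<Longrightarrow> c \<in> R \<Longrightarrow> x i * r - c * x i \<in> R \<Longrightarrow> sg i r = c"
  using sig_unique[of i "sg i r" c r] sig_props by (simp add: der_def)

lemma sig_one: "i < n \<Longrightarrow> sg i 1 = 1"
  by (rule sig_eqI) auto

lemma sig_mult:
  assumes "i < n" "r \<in> R" "s \<in> R"
  shows "sg i (r * s) = sg i r * sg i s"
proof (rule sig_eqI)
  have "x i * (r * s) - sg i r * sg i s * x i = sg i r * der i s + der i r * s"
    by (simp add: mult.assoc[symmetric] var_mult_R[of i r])
      (simp add: mult.assoc var_mult_R[of i s] algebra_simps)
  then show "x i * (r * s) - sg i r * sg i s * x i \<in> R"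
    using assms by auto
qed (use assms in auto)

lemma var_mult_monom: "x i * (c * xm \<alpha>) = sg i c * (x i * xm \<alpha>) + der i c * xm \<alpha>"
  by (simp add: mult.assoc[symmetric] var_mult_R[of i c] distrib_right)

definition left_invertible :: "'a \<Rightarrow> bool" where
  "left_invertible u \<longleftrightarrow> (\<exists>v\<in>R. v * u = 1)"

lemma left_invertible_one: "left_invertible 1"
  by (auto simp: left_invertible_def intro: bexI[of _ 1])

lemma left_invertible_mult:
  assumes "left_invertible a" "left_invertible b"
  shows "left_invertible (a * b)"
proof -
  obtain v w where "v \<in> R" "v * a = 1" "w \<in> R" "w * b = 1"
    using assms by (auto simp: left_invertible_def)
  moreover have "(w * v) * (a * b) = w * ((v * a) * b)"
    by (simp add: mult.assoc)
  ultimately show ?thesis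
    unfolding left_invertible_def by (intro bexI[of _ "w * v"]) auto
qed

lemma left_invertible_sig:
  assumes "i < n" "u \<in> R" "left_invertible u"
  shows "left_invertible (sg i u)"
proof -
  obtain v where v: "v \<in> R" "v * u = 1"
    using assms(3) by (auto simp: left_invertible_def)
  then have "sg i v * sg i u = 1"
    using sig_mult[OF assms(1) v(1) assms(2)] sig_one[OF assms(1)] by simp
  then show ?thesis
    unfolding left_invertible_def using v assms by (intro bexI[of _ "sg i v"]) auto
qed

lemma left_invertible_nonzero: "left_invertible u \<Longrightarrow> u \<noteq> 0"
  by (auto simp: left_invertible_def)

subsection \<open>The degree filtration\<close>

definition deg_below :: "nat \<Rightarrow> 'a set" where
  "deg_below d = {a. \<forall>\<alpha>. cf a \<alpha> \<noteq> 0 \<longrightarrow> td \<alpha> < d}"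

lemma deg_below_coef: "a \<in> deg_below d \<Longrightarrow> d \<le> td \<alpha> \<Longrightarrow> cf a \<alpha> = 0"
  unfolding deg_below_def by force

lemma deg_belowI: "(\<And>\<alpha>. d \<le> td \<alpha> \<Longrightarrow> cf a \<alpha> = 0) \<Longrightarrow> a \<in> deg_below d"
  unfolding deg_below_def using not_le by auto

lemma deg_below_0: "a \<in> deg_below 0 \<Longrightarrow> a = 0"
  using deg_below_coef coef_eq_zeroD by blast

lemma zero_deg_below [simp]: "0 \<in> deg_below d"
  by (rule deg_belowI) (simp add: coef_zero)

lemma deg_below_add [intro]: "a \<in> deg_below d \<Longrightarrow> b \<in> deg_below d \<Longrightarrow> a + b \<in> deg_below d"
  by (rule deg_belowI) (simp add: coef_add deg_below_coef)

lemma deg_below_mult_R [intro]: "r \<in> R \<Longrightarrow> a \<in> deg_below d \<Longrightarrow> r * a \<in> deg_below d"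
  by (rule deg_belowI) (simp add: coef_mult_left deg_below_coef)

lemma deg_below_sum [intro]: "(\<And>i. i \<in> I \<Longrightarrow> f i \<in> deg_below d) \<Longrightarrow> sum f I \<in> deg_below d"
  by (induction I rule: infinite_finite_induct) auto

lemma deg_below_mono: "a \<in> deg_below d \<Longrightarrow> d \<le> d' \<Longrightarrow> a \<in> deg_below d'"
  by (rule deg_belowI) (simp add: deg_below_coef)

lemma deg_below_monom: "r \<in> R \<Longrightarrow> \<alpha> \<in> exps n \<Longrightarrow> td \<alpha> < d \<Longrightarrow> r * xm \<alpha> \<in> deg_below d"
  by (rule deg_belowI) (auto simp: coef_monom)

lemma deg_below_xmon: "\<alpha> \<in> exps n \<Longrightarrow> td \<alpha> < d \<Longrightarrow> xm \<alpha> \<in> deg_below d"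
  using deg_below_monom[of 1] by simp

lemma deg_below_R: "r \<in> R \<Longrightarrow> r \<in> deg_below (Suc d)"
  by (rule deg_belowI) (auto simp: coef_of_R)

lemma coef_deg_below_support: "a \<in> deg_below d \<Longrightarrow> cf a \<alpha> \<noteq> 0 \<Longrightarrow> \<alpha> \<in> exps n \<and> td \<alpha> < d"
  using deg_below_coef[of a d \<alpha>] coef_nonzero_exps by force

lemma coef_monom_plus_deg_below:
  "a \<in> deg_below (td \<gamma>) \<Longrightarrow> r \<in> R \<Longrightarrow> \<gamma> \<in> exps n \<Longrightarrow> cf (r * xm \<gamma> + a) \<gamma> = r"
  by (simp add: coef_add coef_monom deg_below_coef)

lemma linear_deg_below_2:
  assumes "r0 \<in> R" "\<forall>k. r k \<in> R"
  shows "r0 + (\<Sum>k<n. r k * x k) \<in> deg_below 2"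
proof -
  have "r k * x k \<in> deg_below 2" if "k < n" for k
    using deg_below_monom[of "r k" "unit_exp k" 2] that assms tdeg_unit_exp[OF that]
    by (simp add: xmon_unit_exp unit_exp_exps)
  then show ?thesis
    using assms deg_below_R[of r0 1] by (auto simp: numeral_2_eq_2)
qed

text \<open>Comparing \<open>x\<^sub>i x\<^sub>j = c x\<^sub>j x\<^sub>i + \<dots>\<close> with \<open>x\<^sub>j x\<^sub>i = c' x\<^sub>i x\<^sub>j + \<dots>\<close> in
  degree 2 gives \<open>c' c = 1\<close>.\<close>

lemma vars_commute_left_invertible:
  assumes "j < i" "i < n"
  obtains c r0 r where "c \<in> R" "left_invertible c" "r0 \<in> R" "\<forall>k. r k \<in> R"
    "x i * x j = c * x j * x i + (r0 + (\<Sum>k<n. r k * x k))"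
proof -
  have jn: "j < n"
    using assms by simp
  have rel: "\<forall>i<n. \<forall>j<n. \<exists>c\<in>R. c \<noteq> 0 \<and>
      (\<exists>r0\<in>R. \<exists>r. (\<forall>k. r k \<in> R) \<and> x j * x i - c * x i * x j = r0 + (\<Sum>k<n. r k * x k))"
    using pbw by (simp add: sigma_PBW_def)
  obtain c r0 r where c: "c \<in> R" "r0 \<in> R" "\<forall>k. r k \<in> R"
    and e1: "x i * x j - c * x j * x i = r0 + (\<Sum>k<n. r k * x k)"
    using rel[rule_format, OF jn assms(2)] by blast
  obtain c' r0' r' where c': "c' \<in> R" "r0' \<in> R" "\<forall>k. r' k \<in> R"
    and e2: "x j * x i - c' * x i * x j = r0' + (\<Sum>k<n. r' k * x k)"
    using rel[rule_format, OF assms(2) jn] by blast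
  define p where "p = r0 + (\<Sum>k<n. r k * x k)"
  define p' where "p' = r0' + (\<Sum>k<n. r' k * x k)"
  have e1': "x i * x j = c * x j * x i + p"
    using e1 unfolding p_def[symmetric] by (metis add.commute diff_add_cancel)
  have "x j * x i = c' * (x i * x j) + p'"
    using e2 unfolding p'_def[symmetric] by (metis add.commute diff_add_cancel mult.assoc)
  also have "\<dots> = (c' * c) * (x j * x i) + (c' * p + p')"
    by (simp only: e1') (simp add: distrib_left mult.assoc add.assoc)
  finally have key: "(1 - c' * c) * (x j * x i) = c' * p + p'"
    by (metis add_diff_cancel_left' left_diff_distrib mult_1)
  have "c' * p + p' \<in> deg_below 2"
    unfolding p_def p'_def using linear_deg_below_2 c c' by auto
  moreover have "x j * x i = xm (unit_exp i + unit_exp j)"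
    using xmon_add_unit_exp[of j "unit_exp i"] assms xmon_unit_exp[of i] by (simp add: unit_exp_def)
  moreover have "td (unit_exp i + unit_exp j) = 2"
    using tdeg_add tdeg_unit_exp assms jn by simp
  ultimately have "cf ((1 - c' * c) * xm (unit_exp i + unit_exp j)) (unit_exp i + unit_exp j) = 0"
    using deg_below_coef key by simp
  then have "c' * c = 1"
    using c c' assms jn by (simp add: coef_monom exps_add unit_exp_exps diff_in_R mult_in_R)
  then have "left_invertible c"
    using c' by (auto simp: left_invertible_def)
  then show ?thesis
    using that c e1' unfolding p_def by blast
qed

lemma var_mult_deg_below_step:
  assumes var_xmon: "\<And>\<alpha> j. \<alpha> \<in> exps n \<Longrightarrow> td \<alpha> \<le> D \<Longrightarrow> j < n \<Longrightarrow>
      \<exists>u\<in>R. x j * xm \<alpha> - u * xm (\<alpha> + unit_exp j) \<in> deg_below (Suc (td \<alpha>))"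
    and "i < n" "a \<in> deg_below (Suc D)"
  shows "x i * a \<in> deg_below (Suc (Suc D))"
proof -
  have "x i * (cf a \<alpha> * xm \<alpha>) \<in> deg_below (Suc (Suc D))" if "cf a \<alpha> \<noteq> 0" for \<alpha>
  proof -
    have \<alpha>: "\<alpha> \<in> exps n" "td \<alpha> \<le> D"
      using coef_deg_below_support[OF assms(3) that] by auto
    obtain u where u: "u \<in> R" "x i * xm \<alpha> - u * xm (\<alpha> + unit_exp i) \<in> deg_below (Suc (td \<alpha>))"
      using var_xmon[OF \<alpha> assms(2)] by blast
    let ?c = "cf a \<alpha>"
    have "x i * (?c * xm \<alpha>) = (sg i ?c * u) * xm (\<alpha> + unit_exp i)
        + sg i ?c * (x i * xm \<alpha> - u * xm (\<alpha> + unit_exp i)) + der i ?c * xm \<alpha>"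
      by (simp add: var_mult_monom algebra_simps)
    also have "\<dots> \<in> deg_below (Suc (Suc D))"
      using \<alpha> u assms(2) tdeg_add[of \<alpha> "unit_exp i"] tdeg_unit_exp[OF assms(2)]
      by (intro deg_below_add deg_below_monom deg_below_mult_R deg_below_mono[OF u(2)]
          mult_in_R sig_in_R der_in_R coef_in_R) auto
    finally show ?thesis .
  qed
  moreover have "x i * a = (\<Sum>\<alpha>\<in>{\<alpha>. cf a \<alpha> \<noteq> 0}. x i * (cf a \<alpha> * xm \<alpha>))"
    by (subst coef_expansion[of a]) (simp add: sum_distrib_left)
  ultimately show ?thesis
    by auto
qed

text \<open>To move \<open>x\<^sub>i\<close> past \<open>x\<^sub>j\<close> with \<open>j < i\<close>, use the commutation relation and then the
  claim for the shorter monomial \<open>x\<^sup>\<alpha>\<close>; all error terms have lower degree.\<close>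

lemma var_mult_xmon_commute:
  assumes IH: "\<And>\<beta> k. \<beta> \<in> exps n \<Longrightarrow> td \<beta> \<le> td \<alpha> \<Longrightarrow> k < n \<Longrightarrow>
      \<exists>u\<in>R. left_invertible u \<and> x k * xm \<beta> - u * xm (\<beta> + unit_exp k) \<in> deg_below (Suc (td \<beta>))"
    and ji: "j < i" "i < n" and \<alpha>: "\<alpha> \<in> exps n" "\<forall>l<j. \<alpha> l = 0"
  shows "\<exists>u\<in>R. left_invertible u \<and>
    x i * xm (\<alpha> + unit_exp j) - u * xm (\<alpha> + unit_exp j + unit_exp i) \<in> deg_below (Suc (Suc (td \<alpha>)))"
proof -
  have jn: "j < n"
    using ji by simp
  have var_lower: "x k * a \<in> deg_below (Suc (Suc (td \<alpha>)))" if "k < n" "a \<in> deg_below (Suc (td \<alpha>))" for k a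
    using var_mult_deg_below_step[of "td \<alpha>" k a] IH that by blast
  obtain c r0 r where cr: "c \<in> R" "left_invertible c" "r0 \<in> R" "\<forall>k. r k \<in> R"
    and rel: "x i * x j = c * x j * x i + (r0 + (\<Sum>k<n. r k * x k))"
    using vars_commute_left_invertible[OF ji] by blast
  obtain u where u: "u \<in> R" "left_invertible u"
    "x i * xm \<alpha> - u * xm (\<alpha> + unit_exp i) \<in> deg_below (Suc (td \<alpha>))"
    using IH[OF \<alpha>(1) order_refl ji(2)] by blast
  define lo where "lo = x i * xm \<alpha> - u * xm (\<alpha> + unit_exp i)"
  define p where "p = r0 + (\<Sum>k<n. r k * x k)"
  have "\<alpha> + unit_exp j + unit_exp i = (\<alpha> + unit_exp i) + unit_exp j"
    by (simp add: ac_simps)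
  moreover have "\<forall>l<j. (\<alpha> + unit_exp i) l = 0"
    using \<alpha>(2) ji by (simp add: unit_exp_def)
  ultimately have xa2: "x j * xm (\<alpha> + unit_exp i) = xm (\<alpha> + unit_exp j + unit_exp i)"
    using xmon_add_unit_exp[OF jn] by simp
  have "x i * xm (\<alpha> + unit_exp j) = (x i * x j) * xm \<alpha>"
    by (simp add: xmon_add_unit_exp[OF jn \<alpha>(2)] mult.assoc)
  also have "\<dots> = c * (x j * (u * xm (\<alpha> + unit_exp i) + lo)) + p * xm \<alpha>"
    by (simp add: rel p_def lo_def distrib_right mult.assoc)
  also have "\<dots> = (c * sg j u) * xm (\<alpha> + unit_exp j + unit_exp i)
      + (c * (der j u * xm (\<alpha> + unit_exp i)) + c * (x j * lo) + p * xm \<alpha>)"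
    unfolding distrib_left var_mult_monom xa2 by (simp add: algebra_simps)
  finally have main: "x i * xm (\<alpha> + unit_exp j) - (c * sg j u) * xm (\<alpha> + unit_exp j + unit_exp i)
      = c * (der j u * xm (\<alpha> + unit_exp i)) + c * (x j * lo) + p * xm \<alpha>"
    by simp
  have "p * xm \<alpha> = r0 * xm \<alpha> + (\<Sum>k<n. r k * (x k * xm \<alpha>))"
    by (simp add: p_def distrib_right sum_distrib_right mult.assoc)
  also have "\<dots> \<in> deg_below (Suc (Suc (td \<alpha>)))"
    using cr \<alpha> deg_below_xmon[of \<alpha> "Suc (td \<alpha>)"]
    by (intro deg_below_add deg_below_sum deg_below_monom deg_below_mult_R var_lower) auto
  finally have "p * xm \<alpha> \<in> deg_below (Suc (Suc (td \<alpha>)))" .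
  moreover have "c * (der j u * xm (\<alpha> + unit_exp i)) \<in> deg_below (Suc (Suc (td \<alpha>)))"
    using cr u \<alpha> ji jn tdeg_add[of \<alpha> "unit_exp i"] tdeg_unit_exp[OF ji(2)]
    by (intro deg_below_mult_R deg_below_monom) auto
  moreover have "c * (x j * lo) \<in> deg_below (Suc (Suc (td \<alpha>)))"
    using cr u jn lo_def by (intro deg_below_mult_R var_lower) auto
  moreover have "c * sg j u \<in> R" "left_invertible (c * sg j u)"
    using cr u jn by (auto intro: left_invertible_mult left_invertible_sig)
  ultimately show ?thesis
    using main by (intro bexI[of _ "c * sg j u"]) auto
qed

lemma var_mult_xmon:
  assumes "\<alpha> \<in> exps n" "i < n"
  shows "\<exists>u\<in>R. left_invertible u \<and> x i * xm \<alpha> - u * xm (\<alpha> + unit_exp i) \<in> deg_below (Suc (td \<alpha>))"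
  using assms
proof (induction "td \<alpha>" arbitrary: \<alpha> i rule: less_induct)
  case (less \<alpha>)
  show ?case
  proof (cases "\<forall>l<i. \<alpha> l = 0")
    case True
    then have "x i * xm \<alpha> = xm (\<alpha> + unit_exp i)"
      using xmon_add_unit_exp[OF less.prems(2)] by simp
    then show ?thesis
      by (intro bexI[of _ 1]) (auto simp: left_invertible_one)
  next
    case False
    then obtain l where l: "l < i" "\<alpha> l \<noteq> 0"
      by auto
    then have "\<alpha> \<noteq> 0"
      by auto
    then obtain j \<alpha>' where d: "\<alpha> = \<alpha>' + unit_exp j" "\<forall>l<j. \<alpha>' l = 0" "\<alpha>' \<in> exps n"
      "td \<alpha> = Suc (td \<alpha>')"
      using exps_split_first[OF less.prems(1)] by blast
    have "j < i"
    proof (rule ccontr)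
      assume "\<not> j < i"
      then have "\<alpha> l = 0"
        using l(1) d(1,2) by (simp add: unit_exp_def)
      then show False
        using l(2) by simp
    qed
    then show ?thesis
      using var_mult_xmon_commute[OF _ _ less.prems(2) d(3,2)] less.hyps d(1,4) by force
  qed
qed

lemma var_mult_deg_below:
  assumes "i < n" "a \<in> deg_below d"
  shows "x i * a \<in> deg_below (Suc d)"
proof (cases d)
  case 0
  then have "a = 0"
    using assms(2) deg_below_0 by blast
  then show ?thesis
    by simp
next
  case (Suc D)
  then show ?thesis
    using var_mult_deg_below_step[of D i a] var_mult_xmon assms by blast
qed

lemma xmon_mult_deg_below: "\<alpha> \<in> exps n \<Longrightarrow> a \<in> deg_below d \<Longrightarrow> xm \<alpha> * a \<in> deg_below (d + td \<alpha>)"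
proof (induction "td \<alpha>" arbitrary: \<alpha> rule: less_induct)
  case (less \<alpha>)
  show ?case
  proof (cases "\<alpha> = 0")
    case False
    then obtain j \<alpha>' where "j < n" "\<alpha>' \<in> exps n" "td \<alpha> = Suc (td \<alpha>')" "xm \<alpha> = x j * xm \<alpha>'"
      using exps_split_first[OF less.prems(1)] by metis
    then show ?thesis
      using less var_mult_deg_below by (simp add: mult.assoc)
  qed (use less.prems in simp)
qed

lemma deg_below_mult:
  assumes "a \<in> deg_below d1" "b \<in> deg_below (Suc d2)"
  shows "a * b \<in> deg_below (d1 + d2)"
proof -
  have "cf a \<alpha> * (xm \<alpha> * b) \<in> deg_below (d1 + d2)" if "cf a \<alpha> \<noteq> 0" for \<alpha>
  proof -
    have "\<alpha> \<in> exps n" "td \<alpha> < d1"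
      using coef_deg_below_support[OF assms(1) that] by auto
    then have "xm \<alpha> * b \<in> deg_below (d1 + d2)"
      using xmon_mult_deg_below[OF _ assms(2)] deg_below_mono by fastforce
    then show ?thesis
      by (rule deg_below_mult_R[OF coef_in_R])
  qed
  moreover have "a * b = (\<Sum>\<alpha>\<in>{\<alpha>. cf a \<alpha> \<noteq> 0}. cf a \<alpha> * (xm \<alpha> * b))"
    by (subst coef_expansion[of a]) (simp add: sum_distrib_right mult.assoc)
  ultimately show ?thesis
    by auto
qed


lemma xmon_mult_xmon:
  "\<alpha> \<in> exps n \<Longrightarrow> \<beta> \<in> exps n \<Longrightarrow>
    \<exists>u\<in>R. left_invertible u \<and> xm \<alpha> * xm \<beta> - u * xm (\<alpha> + \<beta>) \<in> deg_below (td \<alpha> + td \<beta>)"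
proof (induction "td \<alpha>" arbitrary: \<alpha> rule: less_induct)
  case (less \<alpha>)
  show ?case
  proof (cases "\<alpha> = 0")
    case True
    then show ?thesis
      by (intro bexI[of _ 1]) (auto simp: left_invertible_one)
  next
    case False
    then obtain j \<alpha>' where d: "j < n" "\<alpha> = \<alpha>' + unit_exp j" "\<alpha>' \<in> exps n" "td \<alpha> = Suc (td \<alpha>')"
      "xm \<alpha> = x j * xm \<alpha>'"
      using exps_split_first[OF less.prems(1)] by metis
    have ab: "\<alpha>' + \<beta> \<in> exps n"
      using d less.prems by auto
    have tds: "td (\<alpha>' + \<beta>) = td \<alpha>' + td \<beta>"
      by (rule tdeg_add)
    obtain u where u: "u \<in> R" "left_invertible u"
      and lo: "xm \<alpha>' * xm \<beta> - u * xm (\<alpha>' + \<beta>) \<in> deg_below (td \<alpha>' + td \<beta>)"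
      using less.hyps[of \<alpha>'] d less.prems by auto
    obtain u' where u': "u' \<in> R" "left_invertible u'"
      and lo': "x j * xm (\<alpha>' + \<beta>) - u' * xm (\<alpha> + \<beta>) \<in> deg_below (Suc (td (\<alpha>' + \<beta>)))"
      using var_mult_xmon[OF ab d(1)] d(2) by (auto simp: ac_simps)
    have "xm \<alpha> * xm \<beta> = x j * (u * xm (\<alpha>' + \<beta>) + (xm \<alpha>' * xm \<beta> - u * xm (\<alpha>' + \<beta>)))"
      by (simp add: d(5) mult.assoc)
    also have "\<dots> = (sg j u * u') * xm (\<alpha> + \<beta>) + (sg j u * (x j * xm (\<alpha>' + \<beta>) - u' * xm (\<alpha> + \<beta>))
        + der j u * xm (\<alpha>' + \<beta>) + x j * (xm \<alpha>' * xm \<beta> - u * xm (\<alpha>' + \<beta>)))"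
      by (simp add: distrib_left var_mult_monom algebra_simps)
    finally have main: "xm \<alpha> * xm \<beta> - (sg j u * u') * xm (\<alpha> + \<beta>)
        = sg j u * (x j * xm (\<alpha>' + \<beta>) - u' * xm (\<alpha> + \<beta>))
          + der j u * xm (\<alpha>' + \<beta>) + x j * (xm \<alpha>' * xm \<beta> - u * xm (\<alpha>' + \<beta>))"
      by simp
    have "sg j u * (x j * xm (\<alpha>' + \<beta>) - u' * xm (\<alpha> + \<beta>)) \<in> deg_below (td \<alpha> + td \<beta>)"
      using lo' u d tds by (intro deg_below_mult_R) auto
    moreover have "der j u * xm (\<alpha>' + \<beta>) \<in> deg_below (td \<alpha> + td \<beta>)"
      using u d tds ab by (intro deg_below_monom) auto
    moreover have "x j * (xm \<alpha>' * xm \<beta> - u * xm (\<alpha>' + \<beta>)) \<in> deg_below (td \<alpha> + td \<beta>)"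
      using var_mult_deg_below[OF d(1) lo] d(4) by simp
    ultimately show ?thesis
      using main u u' d(1)
      by (intro bexI[of _ "sg j u * u'"]) (auto intro: left_invertible_mult left_invertible_sig)
  qed
qed

abbreviation "cb \<equiv> cab R x n"
abbreviation "spw \<equiv> sigpow R x n"

lemma cab_props:
  assumes "\<alpha> \<in> exps n" "\<beta> \<in> exps n"
  shows "cb \<alpha> \<beta> \<in> R" "left_invertible (cb \<alpha> \<beta>)"
    "xm \<alpha> * xm \<beta> - cb \<alpha> \<beta> * xm (\<alpha> + \<beta>) \<in> deg_below (td \<alpha> + td \<beta>)"
proof -
  obtain u where u: "u \<in> R" "left_invertible u"
    "xm \<alpha> * xm \<beta> - u * xm (\<alpha> + \<beta>) \<in> deg_below (td \<alpha> + td \<beta>)"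
    using xmon_mult_xmon[OF assms] by blast
  have "cf (u * xm (\<alpha> + \<beta>) + (xm \<alpha> * xm \<beta> - u * xm (\<alpha> + \<beta>))) (\<alpha> + \<beta>) = u"
    using u assms by (intro coef_monom_plus_deg_below) (auto simp: tdeg_add)
  then have "cb \<alpha> \<beta> = u"
    by (simp add: cab_def)
  then show "cb \<alpha> \<beta> \<in> R" "left_invertible (cb \<alpha> \<beta>)"
    "xm \<alpha> * xm \<beta> - cb \<alpha> \<beta> * xm (\<alpha> + \<beta>) \<in> deg_below (td \<alpha> + td \<beta>)"
    using u by simp_all
qed

lemma foldr_funpow_zero: "\<forall>l\<in>set xs. \<beta> l = 0 \<Longrightarrow> foldr (\<lambda>i f. (g i ^^ \<beta> i) \<circ> f) xs h = h"
  by (induction xs) auto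

lemma sigpow_zero: "spw 0 r = r"
  unfolding sigpow_def by (subst foldr_funpow_zero) simp_all

lemma sigpow_add_unit_exp:
  assumes "j < n" "\<forall>l<j. \<alpha> l = 0"
  shows "spw (\<alpha> + unit_exp j) r = sg j (spw \<alpha> r)"
proof -
  have "\<forall>l<j. (\<alpha> + unit_exp j) l = 0"
    using assms(2) by (simp add: unit_exp_def)
  then have front: "foldr (\<lambda>i f. (sg i ^^ \<beta> i) \<circ> f) [0..<j] h = h"
    if "\<beta> = \<alpha> \<or> \<beta> = \<alpha> + unit_exp j" for \<beta> h
    using that assms(2) by (auto intro: foldr_funpow_zero)
  have tail: "foldr (\<lambda>i f. (sg i ^^ (\<alpha> + unit_exp j) i) \<circ> f) [Suc j..<n] id
      = foldr (\<lambda>i f. (sg i ^^ \<alpha> i) \<circ> f) [Suc j..<n] id"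
    by (intro foldr_cong) (auto simp: unit_exp_def)
  show ?thesis
    unfolding sigpow_def upt_split_at[OF assms(1)] foldr_append
    by (simp only: front tail foldr.simps o_apply simp_thms) (simp add: unit_exp_def)
qed

lemma xmon_mult_R:
  assumes "\<alpha> \<in> exps n" "r \<in> R"
  shows "spw \<alpha> r \<in> R" "xm \<alpha> * r - spw \<alpha> r * xm \<alpha> \<in> deg_below (td \<alpha>)"
proof -
  have "spw \<alpha> r \<in> R \<and> xm \<alpha> * r - spw \<alpha> r * xm \<alpha> \<in> deg_below (td \<alpha>)"
    using assms(1)
  proof (induction "td \<alpha>" arbitrary: \<alpha> rule: less_induct)
    case (less \<alpha>)
    show ?case
    proof (cases "\<alpha> = 0")
      case True
      then show ?thesis
        using assms(2) by (simp add: sigpow_zero)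
    next
      case False
      then obtain j \<alpha>' where d: "j < n" "\<alpha> = \<alpha>' + unit_exp j" "\<forall>l<j. \<alpha>' l = 0" "\<alpha>' \<in> exps n"
        "td \<alpha> = Suc (td \<alpha>')" "xm \<alpha> = x j * xm \<alpha>'"
        using exps_split_first[OF less.prems] by metis
      define s where "s = spw \<alpha>' r"
      define lo where "lo = xm \<alpha>' * r - s * xm \<alpha>'"
      have s: "s \<in> R" "lo \<in> deg_below (td \<alpha>')"
        using less.hyps[of \<alpha>'] d unfolding s_def lo_def by auto
      have "xm \<alpha> * r = x j * (s * xm \<alpha>' + lo)"
        by (simp add: d(6) lo_def mult.assoc)
      also have "\<dots> = sg j s * xm \<alpha> + (der j s * xm \<alpha>' + x j * lo)"
        by (simp add: distrib_left var_mult_monom d(6) add.assoc)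
      finally have "xm \<alpha> * r - sg j s * xm \<alpha> = der j s * xm \<alpha>' + x j * lo"
        by simp
      moreover have "der j s * xm \<alpha>' + x j * lo \<in> deg_below (td \<alpha>)"
        using s d var_mult_deg_below[OF d(1) s(2)] by (intro deg_below_add deg_below_monom) auto
      moreover have "spw \<alpha> r = sg j s"
        using sigpow_add_unit_exp[OF d(1) d(3)] d(2) s_def by simp
      ultimately show ?thesis
        using s d(1) by auto
    qed
  qed
  then show "spw \<alpha> r \<in> R" "xm \<alpha> * r - spw \<alpha> r * xm \<alpha> \<in> deg_below (td \<alpha>)"
    by simp_all
qed

lemma xmon_mult_monom:
  assumes "\<alpha> \<in> exps n" "\<beta> \<in> exps n" "c \<in> R"
  shows "xm \<alpha> * (c * xm \<beta>) - (spw \<alpha> c * cb \<alpha> \<beta>) * xm (\<alpha> + \<beta>) \<in> deg_below (td \<alpha> + td \<beta>)"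
proof -
  define lo1 where "lo1 = xm \<alpha> * c - spw \<alpha> c * xm \<alpha>"
  define lo2 where "lo2 = xm \<alpha> * xm \<beta> - cb \<alpha> \<beta> * xm (\<alpha> + \<beta>)"
  have "xm \<alpha> * (c * xm \<beta>) = (spw \<alpha> c * xm \<alpha> + lo1) * xm \<beta>"
    by (simp add: lo1_def mult.assoc)
  also have "\<dots> = (spw \<alpha> c * cb \<alpha> \<beta>) * xm (\<alpha> + \<beta>) + (spw \<alpha> c * lo2 + lo1 * xm \<beta>)"
    by (simp add: lo2_def algebra_simps)
  finally have "xm \<alpha> * (c * xm \<beta>) - (spw \<alpha> c * cb \<alpha> \<beta>) * xm (\<alpha> + \<beta>) = spw \<alpha> c * lo2 + lo1 * xm \<beta>"
    by simp
  moreover have "spw \<alpha> c * lo2 \<in> deg_below (td \<alpha> + td \<beta>)"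
    using xmon_mult_R[OF assms(1,3)] cab_props[OF assms(1,2)] lo2_def by auto
  moreover have "lo1 * xm \<beta> \<in> deg_below (td \<alpha> + td \<beta>)"
    using deg_below_mult[of lo1 "td \<alpha>" "xm \<beta>" "td \<beta>"] xmon_mult_R[OF assms(1,3)]
      deg_below_xmon[OF assms(2)] lo1_def by simp
  ultimately show ?thesis
    by auto
qed

lemma xmon_mult_expansion:
  assumes "\<alpha> \<in> exps n" "r \<in> R"
  obtains low where "\<And>\<delta>. \<delta> \<in> exps n \<Longrightarrow> low \<delta> \<in> deg_below (td \<alpha> + td \<delta>)"
    "\<And>\<gamma>. cf (r * xm \<alpha> * a) \<gamma> = (\<Sum>\<delta>\<in>{\<delta>. cf a \<delta> \<noteq> 0}.
        (if \<gamma> = \<alpha> + \<delta> then r * (spw \<alpha> (cf a \<delta>) * cb \<alpha> \<delta>) else 0) + r * cf (low \<delta>) \<gamma>)"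
proof
  let ?lead = "\<lambda>\<delta>. spw \<alpha> (cf a \<delta>) * cb \<alpha> \<delta>"
  define low where "low \<delta> = xm \<alpha> * (cf a \<delta> * xm \<delta>) - ?lead \<delta> * xm (\<alpha> + \<delta>)" for \<delta>
  show "low \<delta> \<in> deg_below (td \<alpha> + td \<delta>)" if "\<delta> \<in> exps n" for \<delta>
    unfolding low_def using xmon_mult_monom[OF assms(1) that coef_in_R] .
  fix \<gamma>
  have "r * xm \<alpha> * a = (\<Sum>\<delta>\<in>{\<delta>. cf a \<delta> \<noteq> 0}. (r * ?lead \<delta>) * xm (\<alpha> + \<delta>) + r * low \<delta>)"
    by (subst coef_expansion[of a]) (simp add: sum_distrib_left low_def algebra_simps)
  moreover have "cf ((r * ?lead \<delta>) * xm (\<alpha> + \<delta>) + r * low \<delta>) \<gamma>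
      = (if \<gamma> = \<alpha> + \<delta> then r * ?lead \<delta> else 0) + r * cf (low \<delta>) \<gamma>" if "cf a \<delta> \<noteq> 0" for \<delta>
  proof -
    have \<delta>: "\<delta> \<in> exps n"
      using that coef_nonzero_exps by auto
    then have "r * ?lead \<delta> \<in> R"
      using assms xmon_mult_R(1) cab_props(1) by (intro mult_in_R) auto
    then show ?thesis
      by (simp only: coef_add coef_monom[OF _ exps_add[OF assms(1) \<delta>]] coef_mult_left[OF assms(2)])
  qed
  ultimately show "cf (r * xm \<alpha> * a) \<gamma> = (\<Sum>\<delta>\<in>{\<delta>. cf a \<delta> \<noteq> 0}.
      (if \<gamma> = \<alpha> + \<delta> then r * ?lead \<delta> else 0) + r * cf (low \<delta>) \<gamma>)"
    by (simp add: coef_sum)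
qed

lemma coef_xmon_mult_support:
  assumes "\<alpha> \<in> exps n" "r \<in> R" "cf (r * xm \<alpha> * a) \<gamma> \<noteq> 0"
  obtains \<delta> where "cf a \<delta> \<noteq> 0" "\<gamma> = \<alpha> + \<delta> \<or> td \<gamma> < td \<alpha> + td \<delta>"
proof -
  obtain low where low: "\<And>\<delta>. \<delta> \<in> exps n \<Longrightarrow> low \<delta> \<in> deg_below (td \<alpha> + td \<delta>)"
    and cf_eq: "\<And>\<gamma>. cf (r * xm \<alpha> * a) \<gamma> = (\<Sum>\<delta>\<in>{\<delta>. cf a \<delta> \<noteq> 0}.
        (if \<gamma> = \<alpha> + \<delta> then r * (spw \<alpha> (cf a \<delta>) * cb \<alpha> \<delta>) else 0) + r * cf (low \<delta>) \<gamma>)"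
    using xmon_mult_expansion[OF assms(1,2)] by blast
  obtain \<delta> where \<delta>: "cf a \<delta> \<noteq> 0"
    and nz: "(if \<gamma> = \<alpha> + \<delta> then r * (spw \<alpha> (cf a \<delta>) * cb \<alpha> \<delta>) else 0) + r * cf (low \<delta>) \<gamma> \<noteq> 0"
    using assms(3) unfolding cf_eq by (auto elim: sum.not_neutral_contains_not_neutral)
  have "\<gamma> = \<alpha> + \<delta> \<or> td \<gamma> < td \<alpha> + td \<delta>"
    using nz deg_below_coef[OF low[OF coef_nonzero_exps[OF \<delta>]], of \<gamma>] by (auto split: if_splits)
  then show ?thesis
    using that \<delta> by blast
qed

lemma coef_xmon_mult_top:
  assumes "\<alpha> \<in> exps n" "r \<in> R" "cf a \<beta> \<noteq> 0" "\<And>\<delta>. cf a \<delta> \<noteq> 0 \<Longrightarrow> td \<delta> \<le> td \<beta>"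
  shows "cf (r * xm \<alpha> * a) (\<alpha> + \<beta>) = r * spw \<alpha> (cf a \<beta>) * cb \<alpha> \<beta>"
proof -
  obtain low where low: "\<And>\<delta>. \<delta> \<in> exps n \<Longrightarrow> low \<delta> \<in> deg_below (td \<alpha> + td \<delta>)"
    and cf_eq: "\<And>\<gamma>. cf (r * xm \<alpha> * a) \<gamma> = (\<Sum>\<delta>\<in>{\<delta>. cf a \<delta> \<noteq> 0}.
        (if \<gamma> = \<alpha> + \<delta> then r * (spw \<alpha> (cf a \<delta>) * cb \<alpha> \<delta>) else 0) + r * cf (low \<delta>) \<gamma>)"
    using xmon_mult_expansion[OF assms(1,2)] by blast
  have "cf (low \<delta>) (\<alpha> + \<beta>) = 0" if "cf a \<delta> \<noteq> 0" for \<delta>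
    using low[OF coef_nonzero_exps[OF that]] assms(4)[OF that]
    by (intro deg_below_coef) (auto simp: tdeg_add)
  then have "cf (r * xm \<alpha> * a) (\<alpha> + \<beta>) = (\<Sum>\<delta>\<in>{\<delta>. cf a \<delta> \<noteq> 0}.
      if \<delta> = \<beta> then r * (spw \<alpha> (cf a \<delta>) * cb \<alpha> \<delta>) else 0)"
    unfolding cf_eq by (intro sum.cong) auto
  then show ?thesis
    using assms(3) by (simp add: mult.assoc)
qed

end

section \<open>Leading monomials in \<open>A\<^sup>m\<close>\<close>

locale pbw_module_order = pbw_extension R x n for R :: "'a::ring_1 set" and x n +
  fixes mle :: "mexp \<Rightarrow> mexp \<Rightarrow> bool" and m :: nat
    and vle :: "mexp \<times> nat \<Rightarrow> mexp \<times> nat \<Rightarrow> bool"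
  assumes mon_order: "mon_order R x n mle"
    and vmon_order: "vmon_order R x n mle m vle"
begin

abbreviation "vmons \<equiv> exps n \<times> {..<m}"
abbreviation "vc \<equiv> vcoef R x n"
abbreviation "lmv \<equiv> lmV R x n vle"
abbreviation "lcv \<equiv> lcV R x n vle"
abbreviation "vless X Y \<equiv> vle X Y \<and> X \<noteq> Y"

lemma mle_refl: "\<alpha> \<in> exps n \<Longrightarrow> mle \<alpha> \<alpha>"
  using mon_order unfolding mon_order_def by (elim conjE) metis

lemma mle_antisym: "\<alpha> \<in> exps n \<Longrightarrow> \<beta> \<in> exps n \<Longrightarrow> mle \<alpha> \<beta> \<Longrightarrow> mle \<beta> \<alpha> \<Longrightarrow> \<alpha> = \<beta>"
  using mon_order unfolding mon_order_def by (elim conjE) metis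

lemma mle_tdeg: "\<alpha> \<in> exps n \<Longrightarrow> \<beta> \<in> exps n \<Longrightarrow> td \<alpha> < td \<beta> \<Longrightarrow> mle \<alpha> \<beta>"
  using mon_order unfolding mon_order_def by (elim conjE) metis

lemma vle_refl: "X \<in> vmons \<Longrightarrow> vle X X"
  using vmon_order unfolding vmon_order_def Let_def by (elim conjE) metis

lemma vle_antisym: "X \<in> vmons \<Longrightarrow> Y \<in> vmons \<Longrightarrow> vle X Y \<Longrightarrow> vle Y X \<Longrightarrow> X = Y"
  using vmon_order unfolding vmon_order_def Let_def by (elim conjE) metis

lemma vle_trans: "X \<in> vmons \<Longrightarrow> Y \<in> vmons \<Longrightarrow> Z \<in> vmons \<Longrightarrow> vle X Y \<Longrightarrow> vle Y Z \<Longrightarrow> vle X Z"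
  using vmon_order unfolding vmon_order_def Let_def by (elim conjE) metis

lemma vle_total: "X \<in> vmons \<Longrightarrow> Y \<in> vmons \<Longrightarrow> vle X Y \<or> vle Y X"
  using vmon_order unfolding vmon_order_def Let_def by (elim conjE) metis

lemma vle_tdeg: "X \<in> vmons \<Longrightarrow> Y \<in> vmons \<Longrightarrow> td (fst X) < td (fst Y) \<Longrightarrow> vle X Y"
  using vmon_order unfolding vmon_order_def Let_def by (elim conjE) metis

lemma vle_mult:
  "\<alpha> \<in> exps n \<Longrightarrow> \<beta> \<in> exps n \<Longrightarrow> \<gamma> \<in> exps n \<Longrightarrow> i < m \<Longrightarrow> j < m \<Longrightarrow> vle (\<alpha>, i) (\<beta>, j) \<Longrightarrow>
    vle (lmA R x n mle (xm \<gamma> * xm \<alpha>), i) (lmA R x n mle (xm \<gamma> * xm \<beta>), j)"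
  using vmon_order unfolding vmon_order_def Let_def by (elim conjE) metis

lemma vle_tdeg_mono:
  assumes "X \<in> vmons" "Y \<in> vmons" "vle Y X"
  shows "td (fst Y) \<le> td (fst X)"
proof (rule ccontr)
  assume "\<not> td (fst Y) \<le> td (fst X)"
  then have "vle X Y"
    using vle_tdeg[OF assms(1,2)] by simp
  then show False
    using vle_antisym[OF assms(2,1) assms(3)] \<open>\<not> td (fst Y) \<le> td (fst X)\<close> by simp
qed

lemma vle_trans_less: "X \<in> vmons \<Longrightarrow> Y \<in> vmons \<Longrightarrow> Z \<in> vmons \<Longrightarrow> vle X Y \<Longrightarrow> vless Y Z \<Longrightarrow> vless X Z"
  using vle_trans[of X Y Z] vle_antisym[of Y Z] by auto

lemma lmA_xmon_mult:
  assumes "\<alpha> \<in> exps n" "\<beta> \<in> exps n"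
  shows "lmA R x n mle (xm \<alpha> * xm \<beta>) = \<alpha> + \<beta>"
proof -
  define p where "p = xm \<alpha> * xm \<beta>"
  define low where "low = p - cb \<alpha> \<beta> * xm (\<alpha> + \<beta>)"
  have ab: "\<alpha> + \<beta> \<in> exps n"
    using assms by auto
  have low: "low \<in> deg_below (td (\<alpha> + \<beta>))"
    using cab_props(3)[OF assms] by (simp add: low_def p_def tdeg_add)
  have cf_p: "cf p \<gamma> = (if \<gamma> = \<alpha> + \<beta> then cb \<alpha> \<beta> else 0) + cf low \<gamma>" for \<gamma>
    using cab_props(1)[OF assms] ab by (simp add: low_def coef_diff coef_monom)
  have top: "cf p (\<alpha> + \<beta>) \<noteq> 0"
    using cf_p deg_below_coef[OF low] left_invertible_nonzero[OF cab_props(2)[OF assms]] by simp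
  have below: "mle \<gamma> (\<alpha> + \<beta>)" if "cf p \<gamma> \<noteq> 0" for \<gamma>
  proof (cases "\<gamma> = \<alpha> + \<beta>")
    case False
    then have "cf low \<gamma> \<noteq> 0"
      using cf_p that by simp
    then show ?thesis
      using coef_deg_below_support[OF low] ab by (blast intro: mle_tdeg)
  qed (use mle_refl ab in simp)
  have "(THE \<gamma>. cf p \<gamma> \<noteq> 0 \<and> (\<forall>\<delta>. cf p \<delta> \<noteq> 0 \<longrightarrow> mle \<delta> \<gamma>)) = \<alpha> + \<beta>"
    using top below mle_antisym ab coef_nonzero_exps by (intro the_equality) blast+
  then show ?thesis
    unfolding lmA_def p_def .
qed

lemma vcoef_add: "vc (f + g) Y = vc f Y + vc g Y"
  by (simp add: vcoef_def coef_add)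

lemma vcoef_diff: "vc (f - g) Y = vc f Y - vc g Y"
  by (simp add: vcoef_def coef_diff)

lemma vcoef_zero [simp]: "vc 0 Y = 0"
  by (simp add: vcoef_def coef_zero)

lemma vcoef_sum_list: "vc (sum_list (map f xs)) Y = sum_list (map (\<lambda>t. vc (f t) Y) xs)"
  by (induction xs) (simp_all only: list.map sum_list.Cons sum_list.Nil vcoef_add vcoef_zero)

lemma vcoef_support:
  assumes "f \<in> vecs m" "vc f Y \<noteq> 0"
  shows "Y \<in> vmons"
proof -
  have "f (snd Y) \<noteq> 0"
    using assms(2) by (auto simp: vcoef_def coef_zero)
  then have "snd Y < m"
    using assms(1) by (auto simp: vecs_def not_le[symmetric])
  moreover have "fst Y \<in> exps n"
    using assms(2) coef_nonzero_exps by (auto simp: vcoef_def)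
  ultimately show ?thesis
    by (auto simp: mem_Times_iff)
qed

lemma vcoef_eq_zeroD: "(\<And>Y. vc f Y = 0) \<Longrightarrow> f = 0"
proof
  show "f k = 0 k" if "\<And>Y. vc f Y = 0" for k
    using that[of "(_, k)"] coef_eq_zeroD[of "f k"] by (simp add: vcoef_def)
qed

lemma finite_vcoef_support:
  assumes "f \<in> vecs m"
  shows "finite {Y. vc f Y \<noteq> 0}"
proof -
  have "{Y. vc f Y \<noteq> 0} \<subseteq> (\<Union>k<m. {\<alpha>. cf (f k) \<alpha> \<noteq> 0} \<times> {k})"
    using vcoef_support[OF assms] by (force simp: vcoef_def)
  then show ?thesis
    by (rule finite_subset) auto
qed

lemma finite_has_vle_greatest:
  "finite S \<Longrightarrow> S \<noteq> {} \<Longrightarrow> S \<subseteq> vmons \<Longrightarrow> \<exists>X\<in>S. \<forall>Y\<in>S. vle Y X"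
proof (induction S rule: finite_ne_induct)
  case (insert Z S)
  then obtain X where X: "X \<in> S" "\<forall>Y\<in>S. vle Y X"
    by auto
  show ?case
  proof (cases "vle Z X")
    case False
    then have "vle X Z"
      using vle_total[of X Z] X insert.prems by auto
    have "vle Y Z" if "Y \<in> insert Z S" for Y
    proof (cases "Y = Z")
      case False
      then have "Y \<in> S"
        using that by simp
      then show ?thesis
        using X \<open>vle X Z\<close> insert.prems vle_trans[of Y X Z] by auto
    qed (use insert.prems vle_refl in auto)
    then show ?thesis
      by blast
  qed (use X in auto)
qed (use vle_refl in auto)

lemma lmV_props:
  assumes "f \<in> vecs m" "f \<noteq> 0"
  shows "lmv f \<in> vmons" "vc f (lmv f) \<noteq> 0" "\<And>Y. vc f Y \<noteq> 0 \<Longrightarrow> vle Y (lmv f)"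
proof -
  let ?S = "{Y. vc f Y \<noteq> 0}"
  have "?S \<noteq> {}"
    using vcoef_eq_zeroD[of f] assms(2) by auto
  then obtain X where X: "X \<in> ?S" "\<forall>Y\<in>?S. vle Y X"
    using finite_has_vle_greatest[OF finite_vcoef_support[OF assms(1)]] vcoef_support[OF assms(1)]
    by blast
  have "lmv f = X"
    unfolding lmV_def using X vcoef_support[OF assms(1)] vle_antisym
    by (intro the_equality) blast+
  then show "lmv f \<in> vmons" "vc f (lmv f) \<noteq> 0" "\<And>Y. vc f Y \<noteq> 0 \<Longrightarrow> vle Y (lmv f)"
    using X vcoef_support[OF assms(1)] by auto
qed

lemma lmV_exps: "f \<in> vecs m \<Longrightarrow> f \<noteq> 0 \<Longrightarrow> fst (lmv f) \<in> exps n"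
  using lmV_props(1) by force

lemma vcoef_smultv_xmon_vle:
  assumes g: "g \<in> vecs m" "g \<noteq> 0" and lm: "lmv g = (\<beta>, k)" and "r \<in> R" "\<alpha> \<in> exps n"
    and nz: "vc (smultv (r * xm \<alpha>) g) (\<gamma>, k') \<noteq> 0"
  shows "vle (\<gamma>, k') (\<alpha> + \<beta>, k)"
proof -
  have \<beta>: "\<beta> \<in> exps n" "k < m"
    using lmV_props(1)[OF g] lm by auto
  obtain \<delta> where \<delta>: "cf (g k') \<delta> \<noteq> 0" and cases: "\<gamma> = \<alpha> + \<delta> \<or> td \<gamma> < td \<alpha> + td \<delta>"
    using coef_xmon_mult_support[OF assms(5,4)] nz by (auto simp: vcoef_def smultv_def)
  have vle_lm: "vle (\<delta>, k') (\<beta>, k)" and \<delta>k': "\<delta> \<in> exps n" "k' < m"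
    using lmV_props(3)[OF g, of "(\<delta>, k')"] vcoef_support[OF g(1), of "(\<delta>, k')"] \<delta> lm
    by (auto simp: vcoef_def)
  show ?thesis
  proof (cases "\<gamma> = \<alpha> + \<delta>")
    case True
    then show ?thesis
      using vle_mult[OF \<delta>k'(1) \<beta>(1) assms(5) \<delta>k'(2) \<beta>(2) vle_lm]
      by (simp add: lmA_xmon_mult[OF assms(5) \<delta>k'(1)] lmA_xmon_mult[OF assms(5) \<beta>(1)])
  next
    case False
    have "td \<delta> \<le> td \<beta>"
      using vle_tdeg_mono[of "(\<beta>, k)" "(\<delta>, k')"] \<beta> \<delta>k' vle_lm by simp
    then have "td \<gamma> < td (\<alpha> + \<beta>)"
      using False cases by (simp add: tdeg_add)
    moreover have "\<gamma> \<in> exps n"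
      using nz coef_nonzero_exps by (auto simp: vcoef_def)
    ultimately show ?thesis
      using vle_tdeg[of "(\<gamma>, k')" "(\<alpha> + \<beta>, k)"] \<beta> \<delta>k' assms(5) by auto
  qed
qed

lemma vcoef_smultv_xmon_lm:
  assumes g: "g \<in> vecs m" "g \<noteq> 0" and lm: "lmv g = (\<beta>, k)" and "r \<in> R" "\<alpha> \<in> exps n"
  shows "vc (smultv (r * xm \<alpha>) g) (\<alpha> + \<beta>, k) = r * spw \<alpha> (lcv g) * cb \<alpha> \<beta>"
proof -
  have "td \<delta> \<le> td \<beta>" if "cf (g k) \<delta> \<noteq> 0" for \<delta>
    using lmV_props[OF g] vcoef_support[OF g(1), of "(\<delta>, k)"] vle_tdeg_mono[of "(\<beta>, k)" "(\<delta>, k)"]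
      that lm by (auto simp: vcoef_def)
  moreover have "cf (g k) \<beta> \<noteq> 0"
    using lmV_props(2)[OF g] lm by (simp add: vcoef_def)
  ultimately show ?thesis
    using coef_xmon_mult_top[OF assms(5,4)] lm by (simp add: vcoef_def smultv_def lcV_def)
qed

definition rank :: "mexp \<times> nat \<Rightarrow> nat" where
  "rank X = card {Y \<in> vmons. vle Y X}"

lemma finite_exps_tdeg_le: "finite {\<alpha> \<in> exps n. td \<alpha> \<le> d}"
proof -
  let ?f = "\<lambda>\<alpha>::mexp. map \<alpha> [0..<n]"
  have inj: "inj_on ?f (exps n)"
  proof
    fix \<alpha> \<beta> assume a: "\<alpha> \<in> exps n" "\<beta> \<in> exps n" "?f \<alpha> = ?f \<beta>"
    show "\<alpha> = \<beta>"
    proof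
      fix l
      show "\<alpha> l = \<beta> l"
        using a by (cases "l < n") (auto simp: exps_def)
    qed
  qed
  have "?f ` {\<alpha> \<in> exps n. td \<alpha> \<le> d} \<subseteq> {xs. set xs \<subseteq> {0..d} \<and> length xs = n}"
  proof clarsimp
    fix \<alpha> i assume "td \<alpha> \<le> d" "i < n"
    then show "\<alpha> i \<le> d"
      using member_le_sum[of i "{..<n}" \<alpha>] by (simp add: tdeg_def)
  qed
  then have "finite (?f ` {\<alpha> \<in> exps n. td \<alpha> \<le> d})"
    by (rule finite_subset) (simp add: finite_lists_length_eq)
  then show ?thesis
    by (rule finite_imageD[OF _ inj_on_subset[OF inj]]) auto
qed

lemma finite_vle_below: "X \<in> vmons \<Longrightarrow> finite {Y \<in> vmons. vle Y X}"
proof -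
  assume X: "X \<in> vmons"
  have "{Y \<in> vmons. vle Y X} \<subseteq> {\<alpha> \<in> exps n. td \<alpha> \<le> td (fst X)} \<times> {..<m}"
    using vle_tdeg_mono[OF X] by auto
  then show ?thesis
    by (rule finite_subset) (simp add: finite_exps_tdeg_le)
qed

lemma rank_less:
  assumes "X \<in> vmons" "Y \<in> vmons" "vless Y X"
  shows "rank Y < rank X"
  unfolding rank_def
proof (rule psubset_card_mono[OF finite_vle_below[OF assms(1)]])
  have "{Z \<in> vmons. vle Z Y} \<subseteq> {Z \<in> vmons. vle Z X}"
    using assms vle_trans[of _ Y X] by blast
  moreover have "X \<in> {Z \<in> vmons. vle Z X} - {Z \<in> vmons. vle Z Y}"
    using assms vle_refl vle_antisym[of X Y] by blast
  ultimately show "{Z \<in> vmons. vle Z Y} \<subset> {Z \<in> vmons. vle Z X}"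
    by blast
qed

end

section \<open>Representations by monomial multiples of generators\<close>

datatype 'a vterm = VTerm (vt_coeff: 'a) (vt_exp: mexp) (vt_vec: "nat \<Rightarrow> 'a")

context pbw_module_order
begin

definition term_val :: "'a vterm \<Rightarrow> nat \<Rightarrow> 'a" where
  "term_val t = smultv (vt_coeff t * xm (vt_exp t)) (vt_vec t)"

definition term_lm :: "'a vterm \<Rightarrow> mexp \<times> nat" where
  "term_lm t = (vt_exp t + fst (lmv (vt_vec t)), snd (lmv (vt_vec t)))"

definition term_lc :: "'a vterm \<Rightarrow> 'a" where
  "term_lc t = vt_coeff t * spw (vt_exp t) (lcv (vt_vec t)) * cb (vt_exp t) (fst (lmv (vt_vec t)))"

definition rep_val :: "'a vterm list \<Rightarrow> nat \<Rightarrow> 'a" where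
  "rep_val ts = sum_list (map term_val ts)"

lemma rep_val_Nil [simp]: "rep_val [] = 0"
  and rep_val_Cons [simp]: "rep_val (t # ts) = term_val t + rep_val ts"
  and rep_val_append [simp]: "rep_val (ts @ us) = rep_val ts + rep_val us"
  by (simp_all add: rep_val_def)

end

locale pbw_generators = pbw_module_order +
  fixes G :: "(nat \<Rightarrow> 'a) set"
  assumes finite_G: "finite G" and G_vecs: "G \<subseteq> vecs m" and G_nonzero: "0 \<notin> G"
begin

definition gterms :: "'a vterm set" where
  "gterms = {t. vt_coeff t \<in> R \<and> vt_exp t \<in> exps n \<and> vt_vec t \<in> G}"

definition has_rep :: "(mexp \<times> nat \<Rightarrow> bool) \<Rightarrow> (nat \<Rightarrow> 'a) \<Rightarrow> bool" where
  "has_rep P f \<longleftrightarrow> (\<exists>ts. set ts \<subseteq> gterms \<and> rep_val ts = f \<and> (\<forall>t\<in>set ts. P (term_lm t)))"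

lemma gterm_vec: "t \<in> gterms \<Longrightarrow> vt_vec t \<in> vecs m \<and> vt_vec t \<noteq> 0"
  using G_vecs G_nonzero by (auto simp: gterms_def)

lemma
  assumes "t \<in> gterms"
  shows term_val_vecs: "term_val t \<in> vecs m"
    and term_lm_vmons: "term_lm t \<in> vmons"
    and vcoef_term_val_vle: "vc (term_val t) Y \<noteq> 0 \<Longrightarrow> vle Y (term_lm t)"
    and vcoef_term_val_lm: "vc (term_val t) (term_lm t) = term_lc t"
proof -
  let ?g = "vt_vec t"
  have g: "?g \<in> vecs m" "?g \<noteq> 0"
    using gterm_vec[OF assms] by auto
  have lm: "lmv ?g = (fst (lmv ?g), snd (lmv ?g))"
    by simp
  have t: "vt_coeff t \<in> R" "vt_exp t \<in> exps n"
    using assms by (auto simp: gterms_def)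
  show "term_val t \<in> vecs m"
    using g by (auto simp: term_val_def)
  show "term_lm t \<in> vmons"
    using lmV_props(1)[OF g] t by (auto simp: term_lm_def)
  show "vle Y (term_lm t)" if "vc (term_val t) Y \<noteq> 0"
    using vcoef_smultv_xmon_vle[OF g lm t, of "fst Y" "snd Y"] that by (simp add: term_val_def term_lm_def)
  show "vc (term_val t) (term_lm t) = term_lc t"
    using vcoef_smultv_xmon_lm[OF g lm t] by (simp add: term_val_def term_lm_def term_lc_def)
qed

lemma rep_val_vecs: "set ts \<subseteq> gterms \<Longrightarrow> rep_val ts \<in> vecs m"
  by (induction ts) (auto simp: rep_val_def intro: term_val_vecs)

lemma vcoef_rep_val_vle:
  assumes "set ts \<subseteq> gterms" "X \<in> vmons" "\<forall>t\<in>set ts. vle (term_lm t) X" "vc (rep_val ts) Y \<noteq> 0"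
  shows "vle Y X"
proof -
  obtain t where t: "t \<in> set ts" "vc (term_val t) Y \<noteq> 0"
    using assms(4) by (auto simp: rep_val_def vcoef_sum_list elim: sum_list_map_nonzeroE)
  then have "vle Y (term_lm t)" "Y \<in> vmons"
    using assms(1) vcoef_term_val_vle vcoef_support term_val_vecs by blast+
  then show ?thesis
    using vle_trans[OF _ term_lm_vmons assms(2)] assms(1,3) t(1) by blast
qed

lemma vcoef_rep_val_top:
  assumes "set ts \<subseteq> gterms" "X \<in> vmons" "\<forall>t\<in>set ts. vle (term_lm t) X"
  shows "vc (rep_val ts) X = sum_list (map term_lc (filter (\<lambda>t. term_lm t = X) ts))"
proof -
  have "vc (term_val t) X = (if term_lm t = X then term_lc t else 0)" if "t \<in> set ts" for t
  proof (cases "term_lm t = X")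
    case False
    then have "\<not> vle X (term_lm t)"
      using vle_antisym[OF term_lm_vmons assms(2)] assms that by blast
    then show ?thesis
      using vcoef_term_val_vle[of t X] assms(1) that False by auto
  qed (use vcoef_term_val_lm assms(1) that in auto)
  then show ?thesis
    by (simp add: rep_val_def vcoef_sum_list sum_list_map_filter' cong: map_cong)
qed


lemma red1_terms:
  assumes "f \<in> vecs m" "red1 R x n vle G f h"
  obtains ts where "f \<noteq> 0" "set ts \<subseteq> gterms" "\<forall>t\<in>set ts. term_lm t = lmv f"
    "lcv f = sum_list (map term_lc ts)" "h = f - rep_val ts"
proof -
  obtain k :: nat and fs rs as where
    c: "\<forall>i<k. fs i \<in> G \<and> rs i \<in> R \<and> snd (lmv (fs i)) = snd (lmv f) \<and> as i + fst (lmv (fs i)) = fst (lmv f)"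
    and lc: "lcv f = (\<Sum>i<k. rs i * spw (as i) (lcv (fs i)) * cb (as i) (fst (lmv (fs i))))"
    and h: "h = f - (\<Sum>i<k. smultv (rs i * xm (as i)) (fs i))"
    using assms(2) unfolding red1_def by (elim conjE exE) (rule that; assumption)
  have f: "f \<noteq> 0"
    using assms(2) by (simp add: red1_def)
  define ts where "ts = map (\<lambda>i. VTerm (rs i) (as i) (fs i)) [0..<k]"
  have "as i \<in> exps n" if "i < k" for i
    using c that lmV_exps[OF assms(1) f] by (metis exps_add_left)
  then have "set ts \<subseteq> gterms"
    using c by (auto simp: ts_def gterms_def)
  moreover have "\<forall>t\<in>set ts. term_lm t = lmv f"
    using c by (auto simp: ts_def term_lm_def prod_eq_iff)
  moreover have "lcv f = sum_list (map term_lc ts)" "h = f - rep_val ts"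
    using lc h by (simp_all add: ts_def rep_val_def sum_list_map_upt term_lc_def term_val_def)
  ultimately show ?thesis
    using that f by blast
qed

lemma red1_of_terms:
  assumes "f \<noteq> 0" "set ts \<subseteq> gterms" "\<forall>t\<in>set ts. term_lm t = lmv f"
    "lcv f = sum_list (map term_lc ts)"
  shows "red1 R x n vle G f (f - rep_val ts)"
proof -
  have nth_ts: "ts ! i \<in> gterms" "term_lm (ts ! i) = lmv f" if "i < length ts" for i
    using assms(2,3) nth_mem[OF that] by auto
  have sums: "sum_list (map g ts) = (\<Sum>i<length ts. g (ts ! i))" for g :: "'a vterm \<Rightarrow> 'b::comm_monoid_add"
    by (subst map_nth[symmetric]) (simp add: sum_list_map_upt)
  show ?thesis
    unfolding red1_def
  proof (intro conjI assms(1) exI[of _ "length ts"] exI[of _ "\<lambda>i. vt_vec (ts ! i)"]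
      exI[of _ "\<lambda>i. vt_coeff (ts ! i)"] exI[of _ "\<lambda>i. vt_exp (ts ! i)"])
    show "\<forall>i<length ts. vt_vec (ts ! i) \<in> G \<and> vt_coeff (ts ! i) \<in> R
        \<and> snd (lmv (vt_vec (ts ! i))) = snd (lmv f) \<and> vt_exp (ts ! i) + fst (lmv (vt_vec (ts ! i))) = fst (lmv f)"
      using nth_ts by (auto simp: gterms_def term_lm_def prod_eq_iff)
    show "lcv f = (\<Sum>i<length ts. vt_coeff (ts ! i) * spw (vt_exp (ts ! i)) (lcv (vt_vec (ts ! i)))
        * cb (vt_exp (ts ! i)) (fst (lmv (vt_vec (ts ! i)))))"
      using assms(4) sums[of term_lc] by (simp add: term_lc_def)
    show "f - rep_val ts = f - (\<Sum>i<length ts. smultv (vt_coeff (ts ! i) * xm (vt_exp (ts ! i))) (vt_vec (ts ! i)))"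
      using sums[of term_val] by (simp add: rep_val_def term_val_def)
  qed
qed

lemma red1_lowers:
  assumes "f \<in> vecs m" "red1 R x n vle G f h"
  shows "h \<in> vecs m" "vc h Y \<noteq> 0 \<Longrightarrow> vless Y (lmv f)"
proof -
  obtain ts where f: "f \<noteq> 0" and ts: "set ts \<subseteq> gterms" "\<forall>t\<in>set ts. term_lm t = lmv f"
    and lc: "lcv f = sum_list (map term_lc ts)" and h: "h = f - rep_val ts"
    using assms by (rule red1_terms)
  note lm = lmV_props[OF assms(1) f]
  show "h \<in> vecs m"
    using h assms(1) rep_val_vecs[OF ts(1)] by auto
  have lm_vle: "\<forall>t\<in>set ts. vle (term_lm t) (lmv f)"
    using ts(2) vle_refl[OF lm(1)] by simp
  assume Y: "vc h Y \<noteq> 0"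
  have "vc (rep_val ts) (lmv f) = lcv f"
    using vcoef_rep_val_top[OF ts(1) lm(1) lm_vle] ts(2) lc by simp
  then have "vc h (lmv f) = 0"
    by (simp add: h vcoef_diff lcV_def)
  moreover have "vle Y (lmv f)"
  proof (cases "vc f Y = 0")
    case True
    then have "vc (rep_val ts) Y \<noteq> 0"
      using Y by (simp add: h vcoef_diff)
    then show ?thesis
      by (rule vcoef_rep_val_vle[OF ts(1) lm(1) lm_vle])
  qed (rule lm(3))
  ultimately show "vless Y (lmv f)"
    using Y by blast
qed

lemma red1_lmV_less:
  assumes "f \<in> vecs m" "red1 R x n vle G f h" "h \<noteq> 0"
  shows "vless (lmv h) (lmv f)"
  using red1_lowers[OF assms(1,2)] lmV_props(2) assms(3) by blast

lemma has_rep_zero: "has_rep P 0"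
  unfolding has_rep_def by (intro exI[of _ "[]"]) simp

lemma has_rep_term: "t \<in> gterms \<Longrightarrow> P (term_lm t) \<Longrightarrow> has_rep P (term_val t)"
  unfolding has_rep_def by (intro exI[of _ "[t]"]) (simp add: rep_val_def)

lemma has_rep_add:
  assumes "has_rep P f" "has_rep P g"
  shows "has_rep P (f + g)"
proof -
  obtain ts us where "set ts \<subseteq> gterms" "rep_val ts = f" "\<forall>t\<in>set ts. P (term_lm t)"
    "set us \<subseteq> gterms" "rep_val us = g" "\<forall>t\<in>set us. P (term_lm t)"
    using assms by (auto simp: has_rep_def)
  then show ?thesis
    unfolding has_rep_def by (intro exI[of _ "ts @ us"]) auto
qed

lemma has_rep_smultv:
  assumes "\<rho> \<in> R" "has_rep P f"
  shows "has_rep P (smultv \<rho> f)"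
proof -
  obtain ts where ts: "set ts \<subseteq> gterms" "rep_val ts = f" "\<forall>t\<in>set ts. P (term_lm t)"
    using assms(2) by (auto simp: has_rep_def)
  define us where "us = map (\<lambda>t. VTerm (\<rho> * vt_coeff t) (vt_exp t) (vt_vec t)) ts"
  have "rep_val us = smultv \<rho> (rep_val ts)"
    by (simp add: us_def rep_val_def term_val_def smultv_sum_list_right smultv_assoc mult.assoc comp_def)
  moreover have "set us \<subseteq> gterms" "\<forall>t\<in>set us. P (term_lm t)"
    using ts assms(1) by (fastforce simp: us_def gterms_def term_lm_def)+
  ultimately show ?thesis
    unfolding has_rep_def using ts(2) by blast
qed

lemma has_rep_sum: "(\<And>k. k \<in> K \<Longrightarrow> has_rep P (f k)) \<Longrightarrow> has_rep P (\<Sum>k\<in>K. f k)"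
  by (induction K rule: infinite_finite_induct) (auto intro: has_rep_zero has_rep_add)

lemma has_rep_mono:
  assumes "has_rep P f" "\<And>Y. Y \<in> vmons \<Longrightarrow> P Y \<Longrightarrow> Q Y"
  shows "has_rep Q f"
  using assms term_lm_vmons unfolding has_rep_def by blast

lemma has_rep_lmV_vle:
  assumes "has_rep (\<lambda>Y. vle Y X) f" "X \<in> vmons" "f \<noteq> 0"
  shows "vle (lmv f) X"
proof -
  obtain ts where ts: "set ts \<subseteq> gterms" "rep_val ts = f" "\<forall>t\<in>set ts. vle (term_lm t) X"
    using assms(1) by (auto simp: has_rep_def)
  then have "vc (rep_val ts) (lmv f) \<noteq> 0"
    using lmV_props(2)[OF rep_val_vecs[OF ts(1)]] assms(3) by simp
  then show ?thesis
    using vcoef_rep_val_vle[OF ts(1) assms(2) ts(3)] ts(2) by simp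
qed

lemma has_rep_greatest:
  assumes "has_rep P f" "f \<noteq> 0"
  obtains Z where "Z \<in> vmons" "P Z" "has_rep (\<lambda>Y. vle Y Z) f"
proof -
  obtain ts where ts: "set ts \<subseteq> gterms" "rep_val ts = f" "\<forall>t\<in>set ts. P (term_lm t)"
    using assms(1) by (auto simp: has_rep_def)
  have "term_lm ` set ts \<noteq> {}"
    using ts(2) assms(2) by auto
  moreover have "term_lm ` set ts \<subseteq> vmons"
    using ts(1) term_lm_vmons by blast
  ultimately obtain Z where "Z \<in> term_lm ` set ts" "\<forall>Y\<in>term_lm ` set ts. vle Y Z"
    using finite_has_vle_greatest by (meson List.finite_set finite_imageI)
  then show ?thesis
    using that ts term_lm_vmons unfolding has_rep_def by blast
qed

lemma lspan_has_rep:
  assumes "f \<in> lspan G"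
  shows "has_rep (\<lambda>_. True) f"
proof -
  obtain a where f: "f = (\<Sum>g\<in>G. smultv (a g) g)"
    using assms by (auto simp: lspan_def)
  have "smultv (a g) g = (\<Sum>\<delta>\<in>{\<delta>. cf (a g) \<delta> \<noteq> 0}. term_val (VTerm (cf (a g) \<delta>) \<delta> g))" for g
    by (subst coef_expansion[of "a g"]) (simp add: smultv_sum_left term_val_def)
  moreover have "VTerm (cf (a g) \<delta>) \<delta> g \<in> gterms" if "g \<in> G" "cf (a g) \<delta> \<noteq> 0" for g \<delta>
    using that coef_nonzero_exps by (auto simp: gterms_def)
  ultimately show ?thesis
    unfolding f by (auto intro!: has_rep_sum has_rep_term)
qed

lemma red_plus_zero_has_rep:
  assumes "red_plus R x n vle G f 0" "f \<in> vecs m"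
  shows "has_rep (\<lambda>Y. vle Y (lmv f)) f"
  using assms unfolding red_plus_def
proof (induction f rule: converse_rtranclp_induct)
  case (step f h)
  show ?case
  proof (cases "f = 0")
    case False
    then have red: "red1 R x n vle G f h"
      using step.hyps(1) by (simp add: redstep_def)
    then obtain ts where ts: "set ts \<subseteq> gterms" "\<forall>t\<in>set ts. term_lm t = lmv f" and h: "h = f - rep_val ts"
      using red1_terms[OF step.prems red] by blast
    have lm: "lmv f \<in> vmons"
      using lmV_props(1)[OF step.prems False] .
    have "has_rep (\<lambda>Y. vle Y (lmv f)) (rep_val ts)"
      unfolding has_rep_def using ts vle_refl[OF lm] by auto
    moreover have "has_rep (\<lambda>Y. vle Y (lmv f)) h"
    proof (cases "h = 0")
      case False
      have h_vecs: "h \<in> vecs m"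
        using red1_lowers(1)[OF step.prems red] .
      show ?thesis
      proof (rule has_rep_mono[OF step.IH[OF h_vecs]])
        show "vle Y (lmv f)" if "Y \<in> vmons" "vle Y (lmv h)" for Y
          using vle_trans[OF that(1) lmV_props(1)[OF h_vecs False] lm that(2)]
            red1_lmV_less[OF step.prems red False] by blast
      qed
    qed (simp add: has_rep_zero)
    moreover have "f = rep_val ts + h"
      by (simp add: h)
    ultimately show ?thesis
      using has_rep_add by metis
  qed (use has_rep_zero in blast)
qed (simp add: has_rep_zero)

lemma reducible_if_has_rep_at_lmV:
  assumes "has_rep (\<lambda>Y. vle Y (lmv f)) f" "f \<noteq> 0"
  shows "reducible R x n vle G f"
proof -
  obtain ts where ts: "set ts \<subseteq> gterms" "rep_val ts = f" "\<forall>t\<in>set ts. vle (term_lm t) (lmv f)"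
    using assms(1) by (auto simp: has_rep_def)
  have f: "f \<in> vecs m"
    using rep_val_vecs[OF ts(1)] ts(2) by simp
  define T where "T = filter (\<lambda>t. term_lm t = lmv f) ts"
  have "lcv f = sum_list (map term_lc T)"
    using vcoef_rep_val_top[OF ts(1) lmV_props(1)[OF f assms(2)] ts(3)] ts(2)
    by (simp add: T_def lcV_def)
  moreover have "set T \<subseteq> gterms" "\<forall>t\<in>set T. term_lm t = lmv f"
    using ts(1) by (auto simp: T_def)
  ultimately have "red1 R x n vle G f (f - rep_val T)"
    using red1_of_terms assms(2) by blast
  then show ?thesis
    using assms(2) by (auto simp: reducible_def)
qed


lemma rep_val_in_submodule:
  assumes "submodule m M" "G \<subseteq> M" "set ts \<subseteq> gterms"
  shows "rep_val ts \<in> M"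
  using assms(3)
proof (induction ts)
  case (Cons t ts)
  have "vt_vec t \<in> M"
    using Cons.prems assms(2) by (auto simp: gterms_def)
  then have "term_val t \<in> M"
    unfolding term_val_def by (rule submodule_smultv[OF assms(1)])
  moreover have "rep_val ts \<in> M"
    using Cons by simp
  ultimately show ?case
    unfolding rep_val_Cons by (rule submodule_add[OF assms(1)])
qed (use assms(1) in \<open>simp add: submodule_def\<close>)

lemma red_plus_zero_if_reducible:
  assumes M: "submodule m M" "G \<subseteq> M" and red: "\<forall>f\<in>M. f \<noteq> 0 \<longrightarrow> reducible R x n vle G f"
    and "f \<in> M"
  shows "red_plus R x n vle G f 0"
proof -
  have "red_plus R x n vle G f 0" if "f \<in> M" "f \<noteq> 0" "rank (lmv f) = N" for f N
    using that
  proof (induction N arbitrary: f rule: less_induct)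
    case (less N)
    have f: "f \<in> vecs m"
      using less.prems(1) M(1) by (auto simp: submodule_def)
    obtain h where step: "red1 R x n vle G f h"
      using red less.prems by (auto simp: reducible_def)
    then obtain ts where "set ts \<subseteq> gterms" "h = f - rep_val ts"
      using red1_terms[OF f step] by blast
    then have hM: "h \<in> M"
      using submodule_diff[OF M(1) less.prems(1) rep_val_in_submodule[OF M]] by simp
    have "red_plus R x n vle G h 0"
    proof (cases "h = 0")
      case False
      have "rank (lmv h) < N"
        using rank_less lmV_props(1) red1_lmV_less[OF f step False] red1_lowers(1)[OF f step]
          False f less.prems by metis
      then show ?thesis
        using less.IH hM False by blast
    qed (simp add: red_plus_def)
    moreover have "redstep R x n vle G f h"
      using step by (simp add: redstep_def)
    ultimately show ?case
      unfolding red_plus_def by (metis converse_rtranclp_into_rtranclp)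
  qed
  then show ?thesis
    using assms(4) by (cases "f = 0") (auto simp: red_plus_def)
qed

section \<open>S-vectors\<close>

definition svec :: "(nat \<Rightarrow> 'a) set \<Rightarrow> mexp \<Rightarrow> ((nat \<Rightarrow> 'a) \<Rightarrow> 'a) \<Rightarrow> nat \<Rightarrow> 'a" where
  "svec F \<theta> b = (\<Sum>g\<in>F. smultv (b g * xm (gam R x n vle F g + \<theta>)) g)"

lemma svec_lincomb:
  "finite K \<Longrightarrow> svec F \<theta> (\<lambda>g. \<Sum>k\<in>K. \<rho> k * k g) = (\<Sum>k\<in>K. smultv (\<rho> k) (svec F \<theta> k))"
  unfolding svec_def
  by (simp add: smultv_sum_right smultv_assoc sum_distrib_right smultv_sum_left mult.assoc)
    (rule sum.swap)

definition svec_criterion :: "((nat \<Rightarrow> 'a) set \<Rightarrow> mexp \<Rightarrow> ((nat \<Rightarrow> 'a) \<Rightarrow> 'a) set) \<Rightarrow> bool" where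
  "svec_criterion B \<longleftrightarrow> (\<forall>F. F \<subseteq> G \<longrightarrow> XF_nonzero R x n vle F \<longrightarrow>
     (\<forall>\<theta>\<in>exps n. \<forall>b\<in>B F \<theta>. red_plus R x n vle G (svec F \<theta> b) 0))"

definition syz_generators :: "((nat \<Rightarrow> 'a) set \<Rightarrow> mexp \<Rightarrow> ((nat \<Rightarrow> 'a) \<Rightarrow> 'a) set) \<Rightarrow> bool" where
  "syz_generators B \<longleftrightarrow> (\<forall>F \<theta>. F \<subseteq> G \<longrightarrow> XF_nonzero R x n vle F \<longrightarrow> \<theta> \<in> exps n \<longrightarrow>
     finite (B F \<theta>) \<and> Rspan R (B F \<theta>) = SF R x n vle F \<theta>)"

text \<open>An S-vector built from a syzygy has vanishing coefficient at the common leading monomial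
  \<open>X\<close>, so its reduction to zero represents it strictly below \<open>X\<close>.\<close>

lemma svec_has_rep_below:
  assumes F: "F \<subseteq> G" and X: "X \<in> vmons"
    and lm: "\<And>g. g \<in> F \<Longrightarrow> (gam R x n vle F g + \<theta> + fst (lmv g), snd (lmv g)) = X"
    and b: "b \<in> SF R x n vle F \<theta>" and red: "red_plus R x n vle G (svec F \<theta> b) 0"
  shows "has_rep (\<lambda>Y. vless Y X) (svec F \<theta> b)"
proof -
  have "finite F"
    using finite_G F by (rule finite_subset[rotated])
  then obtain Fl where Fl: "set Fl = F" "distinct Fl"
    using finite_distinct_list by blast
  define ts where "ts = map (\<lambda>g. VTerm (b g) (gam R x n vle F g + \<theta>) g) Fl"
  have "gam R x n vle F g + \<theta> \<in> exps n" if "g \<in> F" for g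
  proof -
    have "gam R x n vle F g + \<theta> + fst (lmv g) \<in> exps n"
      using lm[OF that] X by auto
    then show ?thesis
      by (rule exps_add_left)
  qed
  then have ts: "set ts \<subseteq> gterms"
    using b F Fl(1) by (auto simp: ts_def gterms_def SF_def)
  have ts_lm: "\<forall>t\<in>set ts. term_lm t = X"
    using lm Fl(1) by (auto simp: ts_def term_lm_def)
  have val: "rep_val ts = svec F \<theta> b"
    by (simp add: ts_def rep_val_def svec_def term_val_def comp_def sum_list_distinct_conv_sum_set Fl)
  have "vc (svec F \<theta> b) X = sum_list (map term_lc ts)"
    using vcoef_rep_val_top[OF ts X] ts_lm vle_refl[OF X] val by simp
  also have "\<dots> = 0"
    using b by (simp add: ts_def term_lc_def comp_def sum_list_distinct_conv_sum_set Fl SF_def)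
  finally have top: "vc (svec F \<theta> b) X = 0" .
  show ?thesis
  proof (cases "svec F \<theta> b = 0")
    case False
    have sv: "svec F \<theta> b \<in> vecs m"
      using rep_val_vecs[OF ts] val by simp
    have "has_rep (\<lambda>Y. vle Y X) (svec F \<theta> b)"
      unfolding has_rep_def using ts ts_lm val vle_refl[OF X] by auto
    then have "vless (lmv (svec F \<theta> b)) X"
      using has_rep_lmV_vle[OF _ X False] lmV_props(2)[OF sv False] top by auto
    show ?thesis
    proof (rule has_rep_mono[OF red_plus_zero_has_rep[OF red sv]])
      show "vless Y X" if "Y \<in> vmons" "vle Y (lmv (svec F \<theta> b))" for Y
        using vle_trans_less[OF that(1) lmV_props(1)[OF sv False] X that(2)] \<open>vless (lmv (svec F \<theta> b)) X\<close> .
    qed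
  qed (use has_rep_zero in simp)
qed


lemma top_terms_exps:
  fixes T :: "'a vterm list" and X :: "mexp \<times> nat"
  defines "F \<equiv> vt_vec ` set T" and "\<theta> \<equiv> \<lambda>l. fst X l - expXF R x n vle (vt_vec ` set T) l"
  assumes lm: "\<forall>t\<in>set T. term_lm t = X"
  shows top_terms_gam: "g \<in> F \<Longrightarrow> gam R x n vle F g + \<theta> + fst (lmv g) = fst X"
    and top_terms_exp: "t \<in> set T \<Longrightarrow> vt_exp t = gam R x n vle F (vt_vec t) + \<theta>"
proof -
  have lm_t: "vt_exp t + fst (lmv (vt_vec t)) = fst X" if "t \<in> set T" for t
    using lm that by (auto simp: term_lm_def)
  have le_X: "fst (lmv g) l \<le> fst X l" if "g \<in> F" for g l
    using lm_t that unfolding F_def by (metis imageE le_add2 plus_fun_apply)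
  show gam: "gam R x n vle F g + \<theta> + fst (lmv g) = fst X" if "g \<in> F" for g
  proof -
    have "fst (lmv g) l \<le> expXF R x n vle F l" "expXF R x n vle F l \<le> fst X l" for l
      unfolding expXF_def F_def using that le_X
      by (auto simp: F_def intro!: Max_ge Max.boundedI)
    then show ?thesis
      using le_X[OF that] by (simp add: gam_def \<theta>_def F_def fun_eq_iff)
  qed
  show "vt_exp t = gam R x n vle F (vt_vec t) + \<theta>" if "t \<in> set T"
  proof
    fix l
    have "vt_exp t + fst (lmv (vt_vec t)) = gam R x n vle F (vt_vec t) + \<theta> + fst (lmv (vt_vec t))"
      using lm_t[OF that] gam[of "vt_vec t"] that by (simp add: F_def)
    then show "vt_exp t l = (gam R x n vle F (vt_vec t) + \<theta>) l"
      by (metis add_right_cancel plus_fun_apply)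
  qed
qed

text \<open>The syzygy \<open>b\<close> assigns to each generator the sum of the coefficients of the terms
  built on it.\<close>

lemma top_terms_syzygy:
  assumes T: "set T \<subseteq> gterms" "T \<noteq> []" "\<forall>t\<in>set T. term_lm t = X"
  obtains F \<theta> b where "F \<subseteq> G" "XF_nonzero R x n vle F" "\<theta> \<in> exps n"
    "\<And>g. g \<in> F \<Longrightarrow> (gam R x n vle F g + \<theta> + fst (lmv g), snd (lmv g)) = X"
    "rep_val T = svec F \<theta> b"
    "sum_list (map term_lc T) = 0 \<Longrightarrow> b \<in> SF R x n vle F \<theta>"
proof -
  define F where "F = vt_vec ` set T"
  define \<theta> where "\<theta> = (\<lambda>l. fst X l - expXF R x n vle F l)"
  define \<gamma> where "\<gamma> g = gam R x n vle F g + \<theta>" for g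
  note gam = top_terms_gam[OF T(3), folded F_def, folded \<theta>_def, folded \<gamma>_def]
    and exp_t = top_terms_exp[OF T(3), folded F_def, folded \<theta>_def, folded \<gamma>_def]
  have F: "F \<subseteq> G" "finite F" and key: "\<forall>t\<in>set T. vt_vec t \<in> F"
    using T by (auto simp: F_def gterms_def)
  obtain t0 where "t0 \<in> set T"
    using T(2) by (cases T) auto
  then have X: "fst X \<in> exps n"
    using T term_lm_vmons[of t0] by (auto simp: mem_Times_iff)
  have lm_snd: "snd (lmv (vt_vec t)) = snd X" if "t \<in> set T" for t
    using T(3) that by (auto simp: term_lm_def)
  define b where "b g = sum_list (map (\<lambda>t. if vt_vec t = g then vt_coeff t else 0) T)" for g
  show ?thesis
  proof
    show "F \<subseteq> G" "XF_nonzero R x n vle F"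
      using F T(2) lm_snd by (auto simp: XF_nonzero_def F_def)
    show "\<theta> \<in> exps n"
      using X by (simp add: \<theta>_def exps_def)
    show "(gam R x n vle F g + \<theta> + fst (lmv g), snd (lmv g)) = X" if g: "g \<in> F" for g
    proof -
      obtain t where "t \<in> set T" "g = vt_vec t"
        using g by (auto simp: F_def)
      then show ?thesis
        using gam[OF g] lm_snd by (simp add: \<gamma>_def prod_eq_iff)
    qed
    have "smultv (b g * xm (\<gamma> g)) g = sum_list (map (\<lambda>t. if vt_vec t = g then term_val t else 0) T)" for g
      unfolding b_def sum_list_mult_const[symmetric] smultv_sum_list_left
      by (rule arg_cong[where f = sum_list], rule map_cong) (auto simp: term_val_def exp_t)
    then show "rep_val T = svec F \<theta> b"
      unfolding rep_val_def svec_def \<gamma>_def[symmetric]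
      by (simp add: sum_list_regroup[OF F(2) key])
    assume lc: "sum_list (map term_lc T) = 0"
    have "b g * (spw (\<gamma> g) (lcv g) * cb (\<gamma> g) (fst (lmv g)))
        = sum_list (map (\<lambda>t. if vt_vec t = g then term_lc t else 0) T)" for g
      unfolding b_def sum_list_mult_const[symmetric]
      by (rule arg_cong[where f = sum_list], rule map_cong) (auto simp: term_lc_def exp_t mult.assoc)
    then have "(\<Sum>g\<in>F. b g * spw (\<gamma> g) (lcv g) * cb (\<gamma> g) (fst (lmv g))) = 0"
      using lc by (simp add: mult.assoc sum_list_regroup[OF F(2) key])
    moreover have "b g \<in> R" for g
      unfolding b_def using T(1) by (intro sum_list_in_R) (auto simp: gterms_def)
    moreover have "b g = 0" if "g \<notin> F" for g
      unfolding b_def using that key by (subst map_cong[OF refl, of _ _ "\<lambda>_. 0"]) auto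
    ultimately show "b \<in> SF R x n vle F \<theta>"
      by (simp add: SF_def \<gamma>_def)
  qed
qed

lemma top_terms_has_rep_below:
  assumes crit: "svec_criterion B" and gens: "syz_generators B"
    and T: "set T \<subseteq> gterms" "\<forall>t\<in>set T. term_lm t = X" and lc: "sum_list (map term_lc T) = 0"
  shows "has_rep (\<lambda>Y. vless Y X) (rep_val T)"
proof (cases "T = []")
  case False
  obtain F \<theta> b where F: "F \<subseteq> G" "XF_nonzero R x n vle F" "\<theta> \<in> exps n"
    and lm: "\<And>g. g \<in> F \<Longrightarrow> (gam R x n vle F g + \<theta> + fst (lmv g), snd (lmv g)) = X"
    and val: "rep_val T = svec F \<theta> b" and b: "b \<in> SF R x n vle F \<theta>"
    using top_terms_syzygy[OF T(1) False T(2)] lc by metis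
  have X: "X \<in> vmons"
    using T False term_lm_vmons by (metis last_in_set subsetD)
  have B: "finite (B F \<theta>)" "Rspan R (B F \<theta>) = SF R x n vle F \<theta>"
    using gens F by (auto simp: syz_generators_def)
  obtain \<rho> where \<rho>: "\<forall>k. \<rho> k \<in> R" "b = (\<lambda>g. \<Sum>k\<in>B F \<theta>. \<rho> k * k g)"
    using b B(2) unfolding Rspan_def by blast
  have "has_rep (\<lambda>Y. vless Y X) (svec F \<theta> k)" if "k \<in> B F \<theta>" for k
  proof (rule svec_has_rep_below[OF F(1) X lm])
    show "k \<in> SF R x n vle F \<theta>"
      using generator_in_Rspan[OF zero_in_R one_in_R B(1) that] B(2) by simp
    show "red_plus R x n vle G (svec F \<theta> k) 0"
      using crit F that by (auto simp: svec_criterion_def)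
  qed
  then show ?thesis
    unfolding val \<rho>(2) svec_lincomb[OF B(1)] using \<rho>(1) by (auto intro: has_rep_sum has_rep_smultv)
qed (simp add: has_rep_zero)

lemma has_rep_below_if_vcoef_zero:
  assumes crit: "svec_criterion B" and gens: "syz_generators B"
    and rep: "has_rep (\<lambda>Y. vle Y X) f" and X: "X \<in> vmons" and top: "vc f X = 0"
  shows "has_rep (\<lambda>Y. vless Y X) f"
proof -
  obtain ts where ts: "set ts \<subseteq> gterms" "rep_val ts = f" "\<forall>t\<in>set ts. vle (term_lm t) X"
    using rep by (auto simp: has_rep_def)
  define T where "T = filter (\<lambda>t. term_lm t = X) ts"
  define U where "U = filter (\<lambda>t. term_lm t \<noteq> X) ts"
  have f: "f = rep_val T + rep_val U"
    using ts(2) sum_list_map_filter_partition[of term_val ts "\<lambda>t. term_lm t = X"]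
    by (simp add: T_def U_def rep_val_def)
  have "sum_list (map term_lc T) = 0"
    using vcoef_rep_val_top[OF ts(1) X ts(3)] ts(2) top by (simp add: T_def)
  then have "has_rep (\<lambda>Y. vless Y X) (rep_val T)"
    using ts(1) by (intro top_terms_has_rep_below[OF crit gens]) (auto simp: T_def)
  moreover have "has_rep (\<lambda>Y. vless Y X) (rep_val U)"
    unfolding has_rep_def using ts by (intro exI[of _ U]) (auto simp: U_def)
  ultimately show ?thesis
    unfolding f by (rule has_rep_add)
qed

text \<open>Induction on the rank of a bound \<open>X\<close> for a representation of \<open>f\<close>: if \<open>X \<noteq> lm(f)\<close>,
  the representation can be lowered.\<close>

lemma reducible_if_svec_criterion:
  assumes crit: "svec_criterion B" and gens: "syz_generators B"
    and f: "f \<in> lspan G" "f \<noteq> 0"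
  shows "reducible R x n vle G f"
proof -
  have "reducible R x n vle G f" if "X \<in> vmons" "has_rep (\<lambda>Y. vle Y X) f" for X
    using that
  proof (induction "rank X" arbitrary: X rule: less_induct)
    case (less X)
    show ?case
    proof (cases "lmv f = X")
      case True
      then show ?thesis
        using reducible_if_has_rep_at_lmV less.prems(2) f(2) by simp
    next
      case False
      have lm: "vle (lmv f) X"
        using has_rep_lmV_vle[OF less.prems(2,1) f(2)] .
      have fv: "f \<in> vecs m"
        using less.prems(2) rep_val_vecs unfolding has_rep_def by blast
      have "vc f X = 0"
      proof (rule ccontr)
        assume "vc f X \<noteq> 0"
        then have "vle X (lmv f)"
          by (rule lmV_props(3)[OF fv f(2)])
        then show False
          using vle_antisym[OF lmV_props(1)[OF fv f(2)] less.prems(1) lm] False by simp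
      qed
      then have "has_rep (\<lambda>Y. vless Y X) f"
        by (rule has_rep_below_if_vcoef_zero[OF crit gens less.prems(2,1)])
      then obtain Z where Z: "Z \<in> vmons" "vless Z X" "has_rep (\<lambda>Y. vle Y Z) f"
        using f(2) by (rule has_rep_greatest)
      show ?thesis
        using less.hyps[OF rank_less[OF less.prems(1) Z(1,2)] Z(1,3)] .
    qed
  qed
  moreover obtain X where "X \<in> vmons" "has_rep (\<lambda>Y. vle Y X) f"
    using lspan_has_rep[OF f(1)] f(2) by (rule has_rep_greatest)
  ultimately show ?thesis
    by blast
qed

theorem groebner_basis_iff_svec_criterion:
  assumes M: "submodule m M" "M = lspan G" "G \<noteq> {}" and gens: "syz_generators B"
  shows "groebner_basis R x n vle M G \<longleftrightarrow> svec_criterion B"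
proof
  have GM: "G \<subseteq> M"
    using M(2) finite_G generator_in_lspan by blast
  show "svec_criterion B" if "groebner_basis R x n vle M G"
  proof -
    have "\<forall>f\<in>M. f \<noteq> 0 \<longrightarrow> reducible R x n vle G f"
      using that by (simp add: groebner_basis_def)
    moreover have "svec F \<theta> b \<in> M" if "F \<subseteq> G" for F \<theta> b
      unfolding svec_def using that GM by (intro submodule_sum[OF M(1)] submodule_smultv[OF M(1)]) auto
    ultimately show ?thesis
      unfolding svec_criterion_def using red_plus_zero_if_reducible[OF M(1) GM] by blast
  qed
  show "groebner_basis R x n vle M G" if "svec_criterion B"
    unfolding groebner_basis_def using reducible_if_svec_criterion[OF that gens] M finite_G GM G_nonzero
    by blast
qed

end

theorem theorem29:
  fixes R :: "'a::ring_1 set" and x :: "nat \<Rightarrow> 'a" and n m :: nat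
    and mle :: "mexp \<Rightarrow> mexp \<Rightarrow> bool"
    and vle :: "mexp \<times> nat \<Rightarrow> mexp \<times> nat \<Rightarrow> bool"
    and M G :: "(nat \<Rightarrow> 'a) set"
    and B :: "(nat \<Rightarrow> 'a) set \<Rightarrow> mexp \<Rightarrow> ((nat \<Rightarrow> 'a) \<Rightarrow> 'a) set"
  assumes pbw: "sigma_PBW R x n"
    and noeth: "left_noetherian R"
    and mord: "mon_order R x n mle"
    and vord: "vmon_order R x n mle m vle"
    and subm: "submodule m M" and Mnz: "M \<noteq> {0}"
    and Gfin: "finite G" and Gnz: "0 \<notin> G" and Gvec: "G \<subseteq> vecs m"
    and Ggen: "M = lspan G"
    and Bgen: "\<And>F \<theta>. F \<subseteq> G \<Longrightarrow> XF_nonzero R x n vle F \<Longrightarrow> \<theta> \<in> exps n \<Longrightarrow>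
                 finite (B F \<theta>) \<and> Rspan R (B F \<theta>) = SF R x n vle F \<theta>"
  shows "(groebner_basis R x n vle M G \<longleftrightarrow>
           (\<forall>F. F \<subseteq> G \<longrightarrow> XF_nonzero R x n vle F \<longrightarrow>
              (\<forall>\<theta>\<in>exps n. \<forall>b\<in>B F \<theta>.
                 red_plus R x n vle G
                   (\<Sum>g\<in>F. smultv (b g * xmon x n (gam R x n vle F g + \<theta>)) g) 0)))
       \<and> (groebner_basis R x n vle M G \<longrightarrow>
           (\<forall>F. F \<subseteq> G \<longrightarrow> XF_nonzero R x n vle F \<longrightarrow>
              (\<forall>b\<in>B F 0.
                 red_plus R x n vle G
                   (\<Sum>g\<in>F. smultv (b g * xmon x n (gam R x n vle F g)) g) 0)))"
proof -
  interpret pbw_generators R x n mle m vle G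
    using pbw mord vord Gfin Gvec Gnz
    by (simp add: pbw_generators_def pbw_generators_axioms_def pbw_module_order_def
        pbw_module_order_axioms_def pbw_extension_def)
  have "G \<noteq> {}"
    using Mnz Ggen by (auto simp: lspan_def)
  moreover have "syz_generators B"
    using Bgen by (simp add: syz_generators_def)
  ultimately have iff: "groebner_basis R x n vle M G \<longleftrightarrow> svec_criterion B"
    using groebner_basis_iff_svec_criterion[OF subm Ggen] by blast
  show ?thesis
  proof (intro conjI impI allI ballI)
    fix F b
    assume "groebner_basis R x n vle M G" "F \<subseteq> G" "XF_nonzero R x n vle F" "b \<in> B F 0"
    then have "red_plus R x n vle G (svec F 0 b) 0"
      using iff[unfolded svec_criterion_def] zero_exps by blast
    then show "red_plus R x n vle G (\<Sum>g\<in>F. smultv (b g * xmon x n (gam R x n vle F g)) g) 0"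
      by (simp only: svec_def add_0_right)
  qed (use iff in \<open>simp only: svec_criterion_def svec_def\<close>)
qed

end
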